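(* Let $\mathcal C$ be a multi-Reedy category. Then $\Theta\mathcal C$ is a multi-Reedy category with inverse subcategory $(\Theta\mathcal C)^-$, direct sub-multicategory $(\Theta\mathcal C)^+( * )$ and degree function $\deg([m](c_1,\dots,c_m))=m+\sum_{i=1}^m\deg(c_i)$, as defined in the context. In particular, $\Theta\mathcal C$ admits the structure of a Reedy category.
   Context: Multimorphisms: for a small category $\mathcal C$ and objects $c,d_1,\dots,d_m$ ($m\ge0$), a multimorphism $c\to d_1,\dots,d_m$ is a tuple $(\alpha_s\colon c\to d_s)_{s=1..m}$ of morphisms of $\mathcal C$ (for $m=0$ there is exactly one). These form a symmetric multicategory $\mathcal C( * )$ (composition: precomposition with a morphism, and postcomposition of each output $d_s$ with a multimorphism out of $d_s$, collecting all outputs; outputs can be permuted); a wide sub-multicategory contains all objects and identities and is closed under these operations. A multi-Reedy category is a small category $\mathcal C$ with a wide subcategory $\mathcal C^-$, a wide sub-multicategory $\mathcal C^+( * )\subseteq\mathcal C( * )$, and $\deg\colon\mathrm{ob}(\mathcal C)\to\mathbb N$ such that: (1) every multimorphism $\alpha$ of $\mathcal C( * )$ factors uniquely as $\alpha=\alpha^+\alpha^-$ with $\alpha^-\colon c\to x$ a morphism in $\mathcal C^-$ and $\alpha^+\colon x\to d_1,\dots,d_m$ in $\mathcal C^+( * )$; (2) every multimorphism $c\to d_1,\dots,d_m$ in $\mathcal C^+( * )$ satisfies $\deg(c)\le\sum_i\deg(d_i)$; a morphism $c\to d$ in $\mathcal C^+=\mathcal C\cap\mathcal C^+( * )$ has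 $\deg c=\deg d$ iff it is an identity; a morphism $c\to d$ in $\mathcal C^-$ has $\deg c\ge\deg d$, with equality iff it is an identity. A Reedy category is the analogous structure with only single-output morphisms (unique factorization $\alpha=\alpha^+\alpha^-$, $\deg$ non-decreasing along $\mathcal C^+$, non-increasing along $\mathcal C^-$, equality iff identity). $\Delta$ is the category of the totally ordered sets $[n]=\{0<1<\dots<n\}$, $n\ge0$, and order-preserving maps. $\Delta^-$ is the subcategory of surjections; $\Delta^+( * )$ consists of the multimorphisms $(\alpha_s\colon[m]\to[n_s])_s$ forming a monomorphic family (if $\alpha_s\beta=\alpha_s\beta'$ for all $s$ then $\beta=\beta'$). $\Theta\mathcal C$: objects are $[m](c_1,\dots,c_m)$ with $m\ge0$ and $c_i\in\mathrm{ob}\,\mathcal C$. A morphism $[m](c_1,\dots,c_m)\to[n](d_1,\dots,d_n)$ is $(\alpha,\{f_i\})$ where $\alpha\colon[m]\to[n]$ is in $\Delta$ and, for each $i=1,\dots,m$, $f_i=(f_{ij}\colon c_i\to d_j)_{\alpha(i-1)<j\le\alpha(i)}$ is a multimorphism of $\mathcal C( * )$. Composition: $(\beta,\{g_j\})\circ(\alpha,\{f_i\})=(\beta\alpha,\{h_i\})$ with $h_{ik}=g_{jk}f_{ij}$ for $\alpha(i-1)<j\le\alpha(i)$, $\beta(j-1)<k\le\beta(j)$. $(\Theta\mathcal C)^-$: morphisms $(\alpha,\{f_i\})$ such that $\alpha\in\Delta^-$ and, for each $i$ with $\alpha(i-1)<\alpha(i)$, the morphism $f_i\colon c_i\to d_{\alpha(i)}$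 is in $\mathcal C^-$. $(\Theta\mathcal C)^+( * )$: multimorphisms $(f_s)_{s=1..u}$ with $f_s=(\alpha_s,\{f_{si}\})\colon[m](c_1,\dots,c_m)\to[n_s](d_{s1},\dots,d_{sn_s})$ such that $(\alpha_s)_s\colon[m]\to[n_1],\dots,[n_u]$ is in $\Delta^+( * )$ and, for each $i=1,\dots,m$, the multimorphism $(f_{sij}\colon c_i\to d_{sj})_{s=1..u,\ \alpha_s(i-1)<j\le\alpha_s(i)}$ is in $\mathcal C^+( * )$. *)

theory Defs
  imports "HOL-Library.Multiset"
begin

text \<open>A small category: a set of objects, a set of arrows, domain, codomain,
  composition (Cmp g f = g after f) and identities.\<close>

record ('o, 'm) cat =
  Ob  :: "'o set"
  Ar  :: "'m set"
  Dom :: "'m \<Rightarrow> 'o"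
  Cod :: "'m \<Rightarrow> 'o"
  Cmp :: "'m \<Rightarrow> 'm \<Rightarrow> 'm"
  Id  :: "'o \<Rightarrow> 'm"

definition is_category :: "('o, 'm) cat \<Rightarrow> bool" where
  "is_category C \<longleftrightarrow>
     (\<forall>f\<in>Ar C. Dom C f \<in> Ob C \<and> Cod C f \<in> Ob C) \<and>
     (\<forall>c\<in>Ob C. Id C c \<in> Ar C \<and> Dom C (Id C c) = c \<and> Cod C (Id C c) = c) \<and>
     (\<forall>f\<in>Ar C. \<forall>g\<in>Ar C. Cod C f = Dom C g \<longrightarrow>
        Cmp C g f \<in> Ar C \<and> Dom C (Cmp C g f) = Dom C f \<and> Cod C (Cmp C g f) = Cod C g) \<and>
     (\<forall>f\<in>Ar C. Cmp C (Id C (Cod C f)) f = f \<and> Cmp C f (Id C (Dom C f)) = f) \<and>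
     (\<forall>f\<in>Ar C. \<forall>g\<in>Ar C. \<forall>h\<in>Ar C. Cod C f = Dom C g \<longrightarrow> Cod C g = Dom C h \<longrightarrow>
        Cmp C h (Cmp C g f) = Cmp C (Cmp C h g) f)"

definition wide_subcat :: "('o, 'm) cat \<Rightarrow> 'm set \<Rightarrow> bool" where
  "wide_subcat C M \<longleftrightarrow> M \<subseteq> Ar C \<and> (\<forall>c\<in>Ob C. Id C c \<in> M) \<and>
     (\<forall>f\<in>M. \<forall>g\<in>M. Cod C f = Dom C g \<longrightarrow> Cmp C g f \<in> M)"

text \<open>A multimorphism c \<rightarrow> d_1,...,d_m is represented as the pair (c, [\<alpha>_1,...,\<alpha>_m])
  with \<alpha>_s : c \<rightarrow> d_s; its targets are the list of codomains.\<close>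

definition mmor :: "('o, 'm) cat \<Rightarrow> ('o \<times> 'm list) set" where
  "mmor C = {(c, fs). c \<in> Ob C \<and> (\<forall>f\<in>set fs. f \<in> Ar C \<and> Dom C f = c)}"

text \<open>Composition in C(*): postcompose each output f_s with a multimorphism
  (given by the list gss!s of morphisms out of Cod f_s), collecting all outputs.\<close>

definition mcomp :: "('o, 'm) cat \<Rightarrow> 'o \<times> 'm list \<Rightarrow> 'm list list \<Rightarrow> 'o \<times> 'm list" where
  "mcomp C cf gss = (fst cf, concat (map (\<lambda>(f, gs). map (\<lambda>g. Cmp C g f) gs) (zip (snd cf) gss)))"

definition wide_submulticat :: "('o, 'm) cat \<Rightarrow> ('o \<times> 'm list) set \<Rightarrow> bool" where
  "wide_submulticat C P \<longleftrightarrow>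
     P \<subseteq> mmor C \<and>
     (\<forall>c\<in>Ob C. (c, [Id C c]) \<in> P) \<and>
     (\<forall>c fs gss. (c, fs) \<in> P \<longrightarrow> length gss = length fs \<longrightarrow>
        (\<forall>s<length fs. (Cod C (fs ! s), gss ! s) \<in> P) \<longrightarrow> mcomp C (c, fs) gss \<in> P) \<and>
     (\<forall>c fs gs. (c, fs) \<in> P \<longrightarrow> mset gs = mset fs \<longrightarrow> (c, gs) \<in> P)"

definition multi_reedy ::
  "('o, 'm) cat \<Rightarrow> 'm set \<Rightarrow> ('o \<times> 'm list) set \<Rightarrow> ('o \<Rightarrow> nat) \<Rightarrow> bool" where
  "multi_reedy C M P deg \<longleftrightarrow>
     is_category C \<and> wide_subcat C M \<and> wide_submulticat C P \<and>
     (\<forall>(c, fs)\<in>mmor C. \<exists>!(a, ps). a \<in> M \<and> Dom C a = c \<and> (Cod C a, ps) \<in> P \<and>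
         map (Cod C) ps = map (Cod C) fs \<and> fs = map (\<lambda>p. Cmp C p a) ps) \<and>
     (\<forall>(c, fs)\<in>P. deg c \<le> sum_list (map (\<lambda>f. deg (Cod C f)) fs)) \<and>
     (\<forall>f\<in>Ar C. (Dom C f, [f]) \<in> P \<longrightarrow>
         (deg (Dom C f) = deg (Cod C f) \<longleftrightarrow> f = Id C (Dom C f))) \<and>
     (\<forall>f\<in>M. deg (Cod C f) \<le> deg (Dom C f) \<and>
         (deg (Dom C f) = deg (Cod C f) \<longleftrightarrow> f = Id C (Dom C f)))"

definition reedy :: "('o, 'm) cat \<Rightarrow> 'm set \<Rightarrow> 'm set \<Rightarrow> ('o \<Rightarrow> nat) \<Rightarrow> bool" where
  "reedy C Mm Mp deg \<longleftrightarrow>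
     is_category C \<and> wide_subcat C Mm \<and> wide_subcat C Mp \<and>
     (\<forall>f\<in>Ar C. \<exists>!(a, p). a \<in> Mm \<and> p \<in> Mp \<and> Dom C a = Dom C f \<and>
         Cod C a = Dom C p \<and> Cod C p = Cod C f \<and> f = Cmp C p a) \<and>
     (\<forall>f\<in>Mp. deg (Dom C f) \<le> deg (Cod C f) \<and>
         (deg (Dom C f) = deg (Cod C f) \<longleftrightarrow> f = Id C (Dom C f))) \<and>
     (\<forall>f\<in>Mm. deg (Cod C f) \<le> deg (Dom C f) \<and>
         (deg (Dom C f) = deg (Cod C f) \<longleftrightarrow> f = Id C (Dom C f)))"

text \<open>An order preserving map [m] \<rightarrow> [n] is encoded as the list of its values
  [\<alpha>(0), ..., \<alpha>(m)].\<close>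

definition delta_mor :: "nat \<Rightarrow> nat \<Rightarrow> nat list \<Rightarrow> bool" where
  "delta_mor m n \<alpha> \<longleftrightarrow> length \<alpha> = Suc m \<and> (\<forall>i<m. \<alpha> ! i \<le> \<alpha> ! Suc i) \<and> (\<forall>i\<le>m. \<alpha> ! i \<le> n)"

definition mono_family :: "nat \<Rightarrow> nat list list \<Rightarrow> bool" where
  "mono_family m \<alpha>s \<longleftrightarrow>
     (\<forall>k \<beta> \<beta>'. delta_mor k m \<beta> \<longrightarrow> delta_mor k m \<beta>' \<longrightarrow>
        (\<forall>\<alpha>\<in>set \<alpha>s. map (\<lambda>b. \<alpha> ! b) \<beta> = map (\<lambda>b. \<alpha> ! b) \<beta>') \<longrightarrow> \<beta> = \<beta>')"

text \<open>A morphism [m](c_1..c_m) \<rightarrow> [n](d_1..d_n) is (\<alpha>, {f_i}); with 0-indexed lists,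
  tcomp ! i lists the morphisms f_{i+1,j} for j = \<alpha>(i)+1 .. \<alpha>(i+1), in order;
  the k-th entry goes c_{i+1} \<rightarrow> d_{\<alpha>(i)+k+1}, i.e. tgt ! (\<alpha>!i + k).\<close>

record ('o, 'm) tmor =
  tsrc  :: "'o list"
  ttgt  :: "'o list"
  tmap  :: "nat list"
  tcomp :: "'m list list"

definition theta_arrows :: "('o, 'm) cat \<Rightarrow> ('o, 'm) tmor set" where
  "theta_arrows C = {F.
     set (tsrc F) \<subseteq> Ob C \<and> set (ttgt F) \<subseteq> Ob C \<and>
     delta_mor (length (tsrc F)) (length (ttgt F)) (tmap F) \<and>
     length (tcomp F) = length (tsrc F) \<and>
     (\<forall>i<length (tsrc F).
        length (tcomp F ! i) = tmap F ! Suc i - tmap F ! i \<and>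
        (\<forall>k<length (tcomp F ! i).
           tcomp F ! i ! k \<in> Ar C \<and> Dom C (tcomp F ! i ! k) = tsrc F ! i \<and>
           Cod C (tcomp F ! i ! k) = ttgt F ! (tmap F ! i + k)))}"

definition theta_cmp :: "('o, 'm) cat \<Rightarrow> ('o, 'm) tmor \<Rightarrow> ('o, 'm) tmor \<Rightarrow> ('o, 'm) tmor" where
  "theta_cmp C G F =
     \<lparr> tsrc = tsrc F, ttgt = ttgt G,
       tmap = map (\<lambda>a. tmap G ! a) (tmap F),
       tcomp = map (\<lambda>i. concat (map (\<lambda>(f, j). map (\<lambda>g. Cmp C g f) (tcomp G ! j))
                     (zip (tcomp F ! i) [tmap F ! i ..< tmap F ! Suc i])))
                 [0 ..< length (tsrc F)] \<rparr>"

definition theta_id :: "('o, 'm) cat \<Rightarrow> 'o list \<Rightarrow> ('o, 'm) tmor" where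
  "theta_id C cs = \<lparr> tsrc = cs, ttgt = cs, tmap = [0 ..< Suc (length cs)],
                     tcomp = map (\<lambda>c. [Id C c]) cs \<rparr>"

definition Theta :: "('o, 'm) cat \<Rightarrow> ('o list, ('o, 'm) tmor) cat" where
  "Theta C = \<lparr> Ob = {cs. set cs \<subseteq> Ob C}, Ar = theta_arrows C, Dom = tsrc, Cod = ttgt,
               Cmp = theta_cmp C, Id = theta_id C \<rparr>"

definition ThetaMinus :: "('o, 'm) cat \<Rightarrow> 'm set \<Rightarrow> ('o, 'm) tmor set" where
  "ThetaMinus C M = {F \<in> theta_arrows C.
     set (tmap F) = {0 .. length (ttgt F)} \<and>
     (\<forall>i<length (tsrc F). tmap F ! i < tmap F ! Suc i \<longrightarrow> tcomp F ! i ! 0 \<in> M)}"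

text \<open>(\<Theta>C)^+(*): the family of underlying \<alpha>_s is in \<Delta>^+(*), and for each i the
  multimorphism (f_{sij})_{s,j} out of c_i is in C^+(*).\<close>

definition ThetaPlus :: "('o, 'm) cat \<Rightarrow> ('o \<times> 'm list) set \<Rightarrow> ('o list \<times> ('o, 'm) tmor list) set" where
  "ThetaPlus C P = {(cs, Fs) \<in> mmor (Theta C).
     mono_family (length cs) (map tmap Fs) \<and>
     (\<forall>i<length cs. (cs ! i, concat (map (\<lambda>F. tcomp F ! i) Fs)) \<in> P)}"

definition ThetaDeg :: "('o \<Rightarrow> nat) \<Rightarrow> 'o list \<Rightarrow> nat" where
  "ThetaDeg deg cs = length cs + sum_list (map deg cs)"

end

theory Submission
  imports Defs
begin

text \<open>An arrow of \<Theta>C amounts to its map \<alpha> in \<Delta> together with one C-arrow into each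
  target object reached by \<alpha>, and composition composes these pointwise.  Given a
  multimorphism (F_s)_s out of [m](c_1,...,c_m), call the step i \<rightarrow> i + 1 moving if some \<alpha>_s
  advances there.  The surjection \<sigma> collapsing the other steps, together with the unique
  factorisation in C, at each moving step i, of the multimorphism formed by all components of
  all F_s out of c_i, assembles into the factorisation of (F_s)_s; it is the only one because
  the direct part separates points and the inverse part is surjective and advances by at most
  one.  For the degrees: along an arrow of (\<Theta>C)^- the degree of [i](c_1,...,c_i) minus that of
  its image grows with i by the inequality for C^-; for (\<Theta>C)^+(*) each deg c_i is bounded by
  the degrees of the targets of its components, and separation of points bounds m by the
  number of targets reached.\<close>

section \<open>Monotone index lists and their blocks\<close>

lemma bounded_lift_Suc_mono_le:
  fixes f :: "nat \<Rightarrow> 'a::order"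
  assumes "\<forall>i<m. f i \<le> f (Suc i)" and "a \<le> b" and "b \<le> m"
  shows "f a \<le> f b"
proof -
  have "f (min i m) \<le> f (min (Suc i) m)" for i
    using assms(1) by (cases "i < m") (simp_all add: min_def)
  from lift_Suc_mono_le[of "\<lambda>i. f (min i m)", OF this \<open>a \<le> b\<close>] show ?thesis
    using assms(2,3) by (simp add: min_def)
qed

lemma upt_split3: "i \<le> j \<Longrightarrow> j \<le> k \<Longrightarrow> [i..<k] = [i..<j] @ [j..<k]"
  using upt_add_eq_append[of i j "k - j"] by simp

definition block_index :: "nat list \<Rightarrow> nat \<Rightarrow> nat" where
  "block_index \<alpha> k = (LEAST i. k < \<alpha> ! Suc i)"

lemma block_index_eqI:
  assumes mono: "\<forall>i<m. \<alpha> ! i \<le> \<alpha> ! Suc i" and "i < m" "\<alpha> ! i \<le> k" "k < \<alpha> ! Suc i"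
  shows "block_index \<alpha> k = i"
  unfolding block_index_def
proof (rule Least_equality)
  fix y assume y: "k < \<alpha> ! Suc y"
  show "i \<le> y"
  proof (rule ccontr)
    assume "\<not> i \<le> y"
    then have "\<alpha> ! Suc y \<le> \<alpha> ! i"
      using bounded_lift_Suc_mono_le[where f = "(!) \<alpha>", OF mono] \<open>i < m\<close> by simp
    then show False using y \<open>\<alpha> ! i \<le> k\<close> by simp
  qed
qed fact

lemma block_index_bounds:
  assumes mono: "\<forall>i<m. \<alpha> ! i \<le> \<alpha> ! Suc i" and "\<alpha> ! 0 \<le> k" "k < \<alpha> ! m"
  shows "block_index \<alpha> k < m" "\<alpha> ! block_index \<alpha> k \<le> k" "k < \<alpha> ! Suc (block_index \<alpha> k)"
proof -
  have "m > 0" using assms(2,3) by (cases m) auto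
  then have ex: "k < \<alpha> ! Suc (m - 1)" using assms(3) by simp
  show "k < \<alpha> ! Suc (block_index \<alpha> k)"
    unfolding block_index_def by (rule LeastI[where P = "\<lambda>i. k < \<alpha> ! Suc i", OF ex])
  have "block_index \<alpha> k \<le> m - 1"
    unfolding block_index_def by (rule Least_le[where P = "\<lambda>i. k < \<alpha> ! Suc i", OF ex])
  then show "block_index \<alpha> k < m" using \<open>m > 0\<close> by simp
  show "\<alpha> ! block_index \<alpha> k \<le> k"
  proof (cases "block_index \<alpha> k")
    case (Suc j)
    then have "\<not> k < \<alpha> ! Suc j"
      using not_less_Least[of j "\<lambda>i. k < \<alpha> ! Suc i"] unfolding block_index_def by simp
    then show ?thesis using Suc by simp
  qed (use assms(2) in simp)
qed

lemma block_index_between: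
  assumes mono: "\<forall>i<m. \<alpha> ! i \<le> \<alpha> ! Suc i"
    and "a \<le> b" "b \<le> m" "\<alpha> ! a \<le> k" "k < \<alpha> ! b"
  shows "a \<le> block_index \<alpha> k" "block_index \<alpha> k < b"
    "\<alpha> ! block_index \<alpha> k \<le> k" "k < \<alpha> ! Suc (block_index \<alpha> k)"
proof -
  note chain = bounded_lift_Suc_mono_le[where f = "(!) \<alpha>", OF mono]
  have "\<alpha> ! 0 \<le> k" "k < \<alpha> ! m" using chain[of 0 a] chain[of b m] assms by auto
  note bounds = block_index_bounds[OF mono this]
  then show "\<alpha> ! block_index \<alpha> k \<le> k" "k < \<alpha> ! Suc (block_index \<alpha> k)" by simp_all
  show "a \<le> block_index \<alpha> k"
  proof (rule ccontr)
    assume "\<not> a \<le> block_index \<alpha> k"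
    then have "\<alpha> ! Suc (block_index \<alpha> k) \<le> \<alpha> ! a" using chain assms by simp
    then show False using bounds assms by simp
  qed
  show "block_index \<alpha> k < b"
  proof (rule ccontr)
    assume "\<not> block_index \<alpha> k < b"
    then have "\<alpha> ! b \<le> \<alpha> ! block_index \<alpha> k" using chain bounds by simp
    then show False using bounds assms by simp
  qed
qed

lemma block_index_map_nth:
  assumes mono_\<beta>: "\<forall>t<n. \<beta> ! t \<le> \<beta> ! Suc t" and mono_\<gamma>: "\<forall>t<p. \<gamma> ! t \<le> \<gamma> ! Suc t"
    and len: "length \<beta> = Suc n" and bound: "\<beta> ! n \<le> p"
    and k: "\<gamma> ! (\<beta> ! 0) \<le> k" "k < \<gamma> ! (\<beta> ! n)"
  shows "block_index (map (\<lambda>a. \<gamma> ! a) \<beta>) k = block_index \<beta> (block_index \<gamma> k)"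
proof -
  note chain_\<beta> = bounded_lift_Suc_mono_le[where f = "(!) \<beta>", OF mono_\<beta>]
  note chain_\<gamma> = bounded_lift_Suc_mono_le[where f = "(!) \<gamma>", OF mono_\<gamma>]
  define j where "j = block_index \<gamma> k"
  have j: "\<beta> ! 0 \<le> j" "j < \<beta> ! n" "\<gamma> ! j \<le> k" "k < \<gamma> ! Suc j"
    using block_index_between[OF mono_\<gamma> _ bound k] chain_\<beta>[of 0 n] unfolding j_def by auto
  define i where "i = block_index \<beta> j"
  have i: "i < n" "\<beta> ! i \<le> j" "j < \<beta> ! Suc i"
    using block_index_between[OF mono_\<beta> _ order_refl j(1,2)] unfolding i_def by auto
  have mono: "\<forall>t<n. map (\<lambda>a. \<gamma> ! a) \<beta> ! t \<le> map (\<lambda>a. \<gamma> ! a) \<beta> ! Suc t"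
  proof (intro allI impI)
    fix t assume "t < n"
    then have "\<beta> ! t \<le> \<beta> ! Suc t" "\<beta> ! Suc t \<le> p" using mono_\<beta> chain_\<beta>[of "Suc t" n] bound by auto
    then show "map (\<lambda>a. \<gamma> ! a) \<beta> ! t \<le> map (\<lambda>a. \<gamma> ! a) \<beta> ! Suc t"
      using chain_\<gamma> len \<open>t < n\<close> by simp
  qed
  have "\<gamma> ! (\<beta> ! i) \<le> k" using chain_\<gamma>[of "\<beta> ! i" j] i j bound by linarith
  moreover have "k < \<gamma> ! (\<beta> ! Suc i)"
    using chain_\<gamma>[of "Suc j" "\<beta> ! Suc i"] chain_\<beta>[of "Suc i" n] i j bound by linarith
  ultimately show ?thesis
    unfolding j_def[symmetric] i_def[symmetric] using len i(1)
    by (intro block_index_eqI[OF mono]) simp_all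
qed

lemma concat_map_blocks:
  assumes mono: "\<forall>i<n. \<beta> ! i \<le> \<beta> ! Suc i" and "a \<le> b" "b \<le> n"
  shows "concat (map (\<lambda>j. map (h j) [\<beta> ! j..<\<beta> ! Suc j]) [a..<b])
       = map (\<lambda>k. h (block_index \<beta> k) k) [\<beta> ! a..<\<beta> ! b]"
  using assms(2,3)
proof (induction b rule: dec_induct)
  case (step b)
  have "\<beta> ! a \<le> \<beta> ! b" "\<beta> ! b \<le> \<beta> ! Suc b"
    using bounded_lift_Suc_mono_le[where f = "(!) \<beta>", OF mono, of a b] mono step.hyps step.prems
    by simp_all
  then have split: "[\<beta> ! a..<\<beta> ! Suc b] = [\<beta> ! a..<\<beta> ! b] @ [\<beta> ! b..<\<beta> ! Suc b]"
    by (rule upt_split3)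
  have "map (\<lambda>k. h (block_index \<beta> k) k) [\<beta> ! b..<\<beta> ! Suc b] = map (h b) [\<beta> ! b..<\<beta> ! Suc b]"
  proof (rule map_cong)
    fix k assume "k \<in> set [\<beta> ! b..<\<beta> ! Suc b]"
    then have "block_index \<beta> k = b" using step.prems by (intro block_index_eqI[OF mono]) auto
    then show "h (block_index \<beta> k) k = h b k" by simp
  qed simp
  then show ?case using step split by simp
qed simp

section \<open>Arrows of \<Theta>C as families of entries\<close>

text \<open>An arrow F : [m](c) \<rightarrow> [n](d) of \<Theta>C has exactly one C-arrow into each target d_k
  with tmap F ! 0 \<le> k < tmap F ! m, namely the entry of block i = block_index (tmap F) k
  at position k - tmap F ! i.  Describing arrows by these entries (tmor_of) turns the
  block-wise composition theta_cmp into pointwise composition.\<close>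

definition tmor_of :: "'o list \<Rightarrow> 'o list \<Rightarrow> nat list \<Rightarrow> (nat \<Rightarrow> 'm) \<Rightarrow> ('o, 'm) tmor" where
  "tmor_of cs ds \<alpha> g = \<lparr>tsrc = cs, ttgt = ds, tmap = \<alpha>,
      tcomp = map (\<lambda>i. map g [\<alpha> ! i..<\<alpha> ! Suc i]) [0..<length cs]\<rparr>"

definition entry :: "('o, 'm) tmor \<Rightarrow> nat \<Rightarrow> 'm" where
  "entry F k = tcomp F ! block_index (tmap F) k ! (k - tmap F ! block_index (tmap F) k)"

lemma theta_arrowsD:
  assumes "F \<in> theta_arrows C"
  shows "set (tsrc F) \<subseteq> Ob C" "set (ttgt F) \<subseteq> Ob C"
    "delta_mor (length (tsrc F)) (length (ttgt F)) (tmap F)"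
    "length (tcomp F) = length (tsrc F)"
    "\<And>i. i < length (tsrc F) \<Longrightarrow> length (tcomp F ! i) = tmap F ! Suc i - tmap F ! i"
    "\<And>i k. i < length (tsrc F) \<Longrightarrow> k < length (tcomp F ! i) \<Longrightarrow>
        tcomp F ! i ! k \<in> Ar C \<and> Dom C (tcomp F ! i ! k) = tsrc F ! i \<and>
        Cod C (tcomp F ! i ! k) = ttgt F ! (tmap F ! i + k)"
  using assms unfolding theta_arrows_def by auto

lemma theta_arrow_mono: "F \<in> theta_arrows C \<Longrightarrow> \<forall>i<length (tsrc F). tmap F ! i \<le> tmap F ! Suc i"
  using theta_arrowsD(3) unfolding delta_mor_def by blast

lemma theta_arrow_mono_le:
  "F \<in> theta_arrows C \<Longrightarrow> a \<le> b \<Longrightarrow> b \<le> length (tsrc F) \<Longrightarrow> tmap F ! a \<le> tmap F ! b"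
  using bounded_lift_Suc_mono_le[where f = "(!) (tmap F)", OF theta_arrow_mono] by blast

lemma length_tmap: "F \<in> theta_arrows C \<Longrightarrow> length (tmap F) = Suc (length (tsrc F))"
  using theta_arrowsD(3) unfolding delta_mor_def by blast

lemma tmap_le_length_ttgt:
  "F \<in> theta_arrows C \<Longrightarrow> i \<le> length (tsrc F) \<Longrightarrow> tmap F ! i \<le> length (ttgt F)"
  using theta_arrowsD(3) unfolding delta_mor_def by blast

lemma entry_in_block:
  assumes F: "F \<in> theta_arrows C" and i: "i < length (tsrc F)"
    and k: "tmap F ! i \<le> k" "k < tmap F ! Suc i"
  shows "entry F k = tcomp F ! i ! (k - tmap F ! i)"
  unfolding entry_def block_index_eqI[OF theta_arrow_mono[OF F] i k] ..

lemma tcomp_eq_map_entry: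
  assumes F: "F \<in> theta_arrows C" and i: "i < length (tsrc F)"
  shows "tcomp F ! i = map (entry F) [tmap F ! i..<tmap F ! Suc i]"
  by (rule nth_equalityI) (use theta_arrowsD(5)[OF F i] entry_in_block[OF F i] in auto)

lemma tmor_of_entry:
  assumes F: "F \<in> theta_arrows C"
  shows "F = tmor_of (tsrc F) (ttgt F) (tmap F) (entry F)"
proof -
  have "tcomp F = map (\<lambda>i. map (entry F) [tmap F ! i..<tmap F ! Suc i]) [0..<length (tsrc F)]"
    by (rule nth_equalityI) (use theta_arrowsD(4)[OF F] tcomp_eq_map_entry[OF F] in auto)
  then show ?thesis unfolding tmor_of_def by simp
qed

lemma entry_arrow:
  assumes F: "F \<in> theta_arrows C" and i: "i < length (tsrc F)"
    and k: "tmap F ! i \<le> k" "k < tmap F ! Suc i"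
  shows "entry F k \<in> Ar C \<and> Dom C (entry F k) = tsrc F ! i \<and> Cod C (entry F k) = ttgt F ! k"
  using theta_arrowsD(5)[OF F i] theta_arrowsD(6)[OF F i, of "k - tmap F ! i"] k
  unfolding entry_in_block[OF F i k] by simp

lemma tmor_of_in_theta_arrows:
  assumes "set cs \<subseteq> Ob C" "set ds \<subseteq> Ob C" "delta_mor (length cs) (length ds) \<alpha>"
    and "\<And>i k. i < length cs \<Longrightarrow> \<alpha> ! i \<le> k \<Longrightarrow> k < \<alpha> ! Suc i \<Longrightarrow>
       g k \<in> Ar C \<and> Dom C (g k) = cs ! i \<and> Cod C (g k) = ds ! k"
  shows "tmor_of cs ds \<alpha> g \<in> theta_arrows C"
  unfolding theta_arrows_def tmor_of_def using assms by auto

lemma tmor_of_cong: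
  assumes "\<And>i k. i < length cs \<Longrightarrow> \<alpha> ! i \<le> k \<Longrightarrow> k < \<alpha> ! Suc i \<Longrightarrow> g k = g' k"
  shows "tmor_of cs ds \<alpha> g = tmor_of cs ds \<alpha> g'"
  unfolding tmor_of_def using assms by (auto intro!: map_cong)

lemma tmor_of_simps [simp]:
  "tsrc (tmor_of cs ds \<alpha> g) = cs" "ttgt (tmor_of cs ds \<alpha> g) = ds" "tmap (tmor_of cs ds \<alpha> g) = \<alpha>"
  unfolding tmor_of_def by simp_all

lemma entry_tmor_of:
  assumes mono: "\<forall>i<length cs. \<alpha> ! i \<le> \<alpha> ! Suc i"
    and "i < length cs" "\<alpha> ! i \<le> k" "k < \<alpha> ! Suc i"
  shows "entry (tmor_of cs ds \<alpha> g) k = g k"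
  using assms unfolding entry_def tmor_of_simps block_index_eqI[OF assms] by (simp add: tmor_of_def)

section \<open>\<Theta>C is a category\<close>

lemma categoryD:
  assumes "is_category C"
  shows "\<And>f. f \<in> Ar C \<Longrightarrow> Dom C f \<in> Ob C \<and> Cod C f \<in> Ob C"
    "\<And>c. c \<in> Ob C \<Longrightarrow> Id C c \<in> Ar C \<and> Dom C (Id C c) = c \<and> Cod C (Id C c) = c"
    "\<And>f g. f \<in> Ar C \<Longrightarrow> g \<in> Ar C \<Longrightarrow> Cod C f = Dom C g \<Longrightarrow>
        Cmp C g f \<in> Ar C \<and> Dom C (Cmp C g f) = Dom C f \<and> Cod C (Cmp C g f) = Cod C g"
    "\<And>f. f \<in> Ar C \<Longrightarrow> Cmp C (Id C (Cod C f)) f = f"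
    "\<And>f. f \<in> Ar C \<Longrightarrow> Cmp C f (Id C (Dom C f)) = f"
    "\<And>f g h. f \<in> Ar C \<Longrightarrow> g \<in> Ar C \<Longrightarrow> h \<in> Ar C \<Longrightarrow> Cod C f = Dom C g \<Longrightarrow>
        Cod C g = Dom C h \<Longrightarrow> Cmp C h (Cmp C g f) = Cmp C (Cmp C h g) f"
  using assms unfolding is_category_def by blast+

lemma wide_subcatD:
  assumes "wide_subcat C M"
  shows "M \<subseteq> Ar C" "c \<in> Ob C \<Longrightarrow> Id C c \<in> M"
    "f \<in> M \<Longrightarrow> g \<in> M \<Longrightarrow> Cod C f = Dom C g \<Longrightarrow> Cmp C g f \<in> M"
  using assms unfolding wide_subcat_def by blast+

lemma wide_submulticatD:
  assumes "wide_submulticat C P"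
  shows "P \<subseteq> mmor C" "c \<in> Ob C \<Longrightarrow> (c, [Id C c]) \<in> P"
    "(c, fs) \<in> P \<Longrightarrow> length gss = length fs \<Longrightarrow>
       (\<And>s. s < length fs \<Longrightarrow> (Cod C (fs ! s), gss ! s) \<in> P) \<Longrightarrow> mcomp C (c, fs) gss \<in> P"
    "(c, fs) \<in> P \<Longrightarrow> mset gs = mset fs \<Longrightarrow> (c, gs) \<in> P"
  using assms unfolding wide_submulticat_def by blast+

lemma delta_mor_comp:
  assumes \<alpha>: "delta_mor m n \<alpha>" and \<beta>: "delta_mor n p \<beta>"
  shows "delta_mor m p (map (\<lambda>a. \<beta> ! a) \<alpha>)"
  unfolding delta_mor_def
proof (intro conjI allI impI)
  show "length (map (\<lambda>a. \<beta> ! a) \<alpha>) = Suc m" using \<alpha> unfolding delta_mor_def by simp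
  have chain: "a \<le> b \<Longrightarrow> b \<le> n \<Longrightarrow> \<beta> ! a \<le> \<beta> ! b" for a b
    using bounded_lift_Suc_mono_le[where f = "(!) \<beta>"] \<beta> unfolding delta_mor_def by blast
  fix i
  show "i < m \<Longrightarrow> map (\<lambda>a. \<beta> ! a) \<alpha> ! i \<le> map (\<lambda>a. \<beta> ! a) \<alpha> ! Suc i"
    using \<alpha> chain unfolding delta_mor_def by simp
  show "i \<le> m \<Longrightarrow> map (\<lambda>a. \<beta> ! a) \<alpha> ! i \<le> p"
    using \<alpha> \<beta> unfolding delta_mor_def by simp
qed

lemma theta_cmp_simps [simp]:
  "tsrc (theta_cmp C G F) = tsrc F" "ttgt (theta_cmp C G F) = ttgt G"
  "tmap (theta_cmp C G F) = map (\<lambda>a. tmap G ! a) (tmap F)"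
  unfolding theta_cmp_def by simp_all

lemma tcomp_theta_cmp:
  "i < length (tsrc F) \<Longrightarrow> tcomp (theta_cmp C G F) ! i =
     concat (map (\<lambda>(f, j). map (\<lambda>g. Cmp C g f) (tcomp G ! j))
       (zip (tcomp F ! i) [tmap F ! i ..< tmap F ! Suc i]))"
  unfolding theta_cmp_def by simp

lemma tcomp_theta_cmp_entry:
  assumes F: "F \<in> theta_arrows C" and i: "i < length (tsrc F)"
  shows "tcomp (theta_cmp C G F) ! i =
     concat (map (\<lambda>j. map (\<lambda>g. Cmp C g (entry F j)) (tcomp G ! j)) [tmap F ! i..<tmap F ! Suc i])"
  unfolding tcomp_theta_cmp[OF i] tcomp_eq_map_entry[OF F i] zip_map1 zip_same_conv_map
  by (simp add: o_def)

lemma theta_cmp_eq_tmor_of: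
  assumes F: "F \<in> theta_arrows C" and G: "G \<in> theta_arrows C" and FG: "ttgt F = tsrc G"
  shows "theta_cmp C G F = tmor_of (tsrc F) (ttgt G) (map (\<lambda>a. tmap G ! a) (tmap F))
           (\<lambda>k. Cmp C (entry G k) (entry F (block_index (tmap G) k)))"
proof -
  have "tcomp (theta_cmp C G F) ! i = map (\<lambda>k. Cmp C (entry G k) (entry F (block_index (tmap G) k)))
          [tmap G ! (tmap F ! i)..<tmap G ! (tmap F ! Suc i)]"
    if i: "i < length (tsrc F)" for i
  proof -
    have a: "tmap F ! i \<le> tmap F ! Suc i" "tmap F ! Suc i \<le> length (tsrc G)"
      using theta_arrow_mono[OF F] tmap_le_length_ttgt[OF F, of "Suc i"] i FG by auto
    have "tcomp G ! j = map (entry G) [tmap G ! j..<tmap G ! Suc j]"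
      if "j \<in> set [tmap F ! i..<tmap F ! Suc i]" for j
      using tcomp_eq_map_entry[OF G] that a by simp
    then have "tcomp (theta_cmp C G F) ! i = concat (map (\<lambda>j. map (\<lambda>k. Cmp C (entry G k) (entry F j))
          [tmap G ! j..<tmap G ! Suc j]) [tmap F ! i..<tmap F ! Suc i])"
      unfolding tcomp_theta_cmp_entry[OF F i] by (intro arg_cong[where f = concat] map_cong) simp_all
    also have "\<dots> = map (\<lambda>k. Cmp C (entry G k) (entry F (block_index (tmap G) k)))
          [tmap G ! (tmap F ! i)..<tmap G ! (tmap F ! Suc i)]"
      by (rule concat_map_blocks[OF theta_arrow_mono[OF G] a])
    finally show ?thesis .
  qed
  then show ?thesis
    unfolding tmor_of_def using length_tmap[OF F]
    by (intro tmor.equality nth_equalityI) (auto simp: theta_cmp_def)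
qed

lemma entry_theta_cmp:
  assumes F: "F \<in> theta_arrows C" and G: "G \<in> theta_arrows C" and FG: "ttgt F = tsrc G"
    and k: "tmap G ! (tmap F ! 0) \<le> k" "k < tmap G ! (tmap F ! length (tsrc F))"
  shows "entry (theta_cmp C G F) k = Cmp C (entry G k) (entry F (block_index (tmap G) k))"
proof -
  let ?\<gamma> = "map (\<lambda>a. tmap G ! a) (tmap F)"
  have "delta_mor (length (tsrc F)) (length (ttgt G)) ?\<gamma>"
    using delta_mor_comp theta_arrowsD(3)[OF F] theta_arrowsD(3)[OF G] FG by metis
  then have mono: "\<forall>i<length (tsrc F). ?\<gamma> ! i \<le> ?\<gamma> ! Suc i" unfolding delta_mor_def by blast
  have "?\<gamma> ! 0 \<le> k" "k < ?\<gamma> ! length (tsrc F)" using k length_tmap[OF F] by simp_all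
  note block = block_index_bounds[OF mono this]
  show ?thesis
    unfolding theta_cmp_eq_tmor_of[OF F G FG] by (rule entry_tmor_of[OF mono block])
qed

lemma theta_cmp_in_theta_arrows:
  assumes C: "is_category C" and F: "F \<in> theta_arrows C" and G: "G \<in> theta_arrows C"
    and FG: "ttgt F = tsrc G"
  shows "theta_cmp C G F \<in> theta_arrows C"
  unfolding theta_cmp_eq_tmor_of[OF F G FG]
proof (rule tmor_of_in_theta_arrows)
  show "set (tsrc F) \<subseteq> Ob C" "set (ttgt G) \<subseteq> Ob C"
    using theta_arrowsD(1)[OF F] theta_arrowsD(2)[OF G] by auto
  show "delta_mor (length (tsrc F)) (length (ttgt G)) (map (\<lambda>a. tmap G ! a) (tmap F))"
    using delta_mor_comp theta_arrowsD(3)[OF F] theta_arrowsD(3)[OF G] FG by metis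
  fix i k assume i: "i < length (tsrc F)"
    and "map (\<lambda>a. tmap G ! a) (tmap F) ! i \<le> k" "k < map (\<lambda>a. tmap G ! a) (tmap F) ! Suc i"
  then have k: "tmap G ! (tmap F ! i) \<le> k" "k < tmap G ! (tmap F ! Suc i)"
    using length_tmap[OF F] by auto
  have a: "tmap F ! i \<le> tmap F ! Suc i" "tmap F ! Suc i \<le> length (tsrc G)"
    using theta_arrow_mono[OF F] tmap_le_length_ttgt[OF F, of "Suc i"] i FG by auto
  define j where "j = block_index (tmap G) k"
  note j = block_index_between[OF theta_arrow_mono[OF G] a k, folded j_def]
  have "entry G k \<in> Ar C \<and> Dom C (entry G k) = tsrc G ! j \<and> Cod C (entry G k) = ttgt G ! k"
    using entry_arrow[OF G _ j(3,4)] j(2) a by simp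
  moreover have "entry F j \<in> Ar C \<and> Dom C (entry F j) = tsrc F ! i \<and> Cod C (entry F j) = ttgt F ! j"
    using entry_arrow[OF F i] j(1,2) by simp
  ultimately show "Cmp C (entry G k) (entry F (block_index (tmap G) k)) \<in> Ar C \<and>
      Dom C (Cmp C (entry G k) (entry F (block_index (tmap G) k))) = tsrc F ! i \<and>
      Cod C (Cmp C (entry G k) (entry F (block_index (tmap G) k))) = ttgt G ! k"
    using categoryD(3)[OF C, of "entry F j" "entry G k"] FG unfolding j_def[symmetric] by simp
qed

lemma theta_id_simps [simp]:
  "tsrc (theta_id C cs) = cs" "ttgt (theta_id C cs) = cs" "tmap (theta_id C cs) = [0..<Suc (length cs)]"
  unfolding theta_id_def by simp_all

lemma theta_id_eq_tmor_of:
  "theta_id C cs = tmor_of cs cs [0..<Suc (length cs)] (\<lambda>k. Id C (cs ! k))"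
proof -
  have "map (\<lambda>c. [Id C c]) cs = map (\<lambda>i. map (\<lambda>k. Id C (cs ! k))
      [[0..<Suc (length cs)] ! i..<[0..<Suc (length cs)] ! Suc i]) [0..<length cs]"
    by (rule nth_equalityI) (simp_all del: upt_Suc, simp)
  then show ?thesis unfolding theta_id_def tmor_of_def by simp
qed

lemma entry_theta_id: "k < length cs \<Longrightarrow> entry (theta_id C cs) k = Id C (cs ! k)"
  unfolding theta_id_eq_tmor_of by (rule entry_tmor_of[of _ _ k]) (simp_all del: upt_Suc)

lemma block_index_upt: "k < n \<Longrightarrow> block_index [0..<Suc n] k = k"
  by (rule block_index_eqI[where m = n]) (simp_all del: upt_Suc)

lemma theta_id_in_theta_arrows:
  assumes C: "is_category C" and cs: "set cs \<subseteq> Ob C"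
  shows "theta_id C cs \<in> theta_arrows C"
  unfolding theta_id_eq_tmor_of
proof (rule tmor_of_in_theta_arrows[OF cs cs])
  show "delta_mor (length cs) (length cs) [0..<Suc (length cs)]"
    unfolding delta_mor_def by (simp del: upt_Suc)
  fix i k assume "i < length cs" "[0..<Suc (length cs)] ! i \<le> k" "k < [0..<Suc (length cs)] ! Suc i"
  then have "k = i" "cs ! i \<in> Ob C" using cs by (auto simp del: upt_Suc)
  then show "Id C (cs ! k) \<in> Ar C \<and> Dom C (Id C (cs ! k)) = cs ! i \<and> Cod C (Id C (cs ! k)) = cs ! k"
    using categoryD(2)[OF C] by simp
qed

lemma theta_cmp_id_left:
  assumes C: "is_category C" and F: "F \<in> theta_arrows C"
  shows "theta_cmp C (theta_id C (ttgt F)) F = F"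
proof -
  have I: "theta_id C (ttgt F) \<in> theta_arrows C"
    by (rule theta_id_in_theta_arrows[OF C theta_arrowsD(2)[OF F]])
  have "a \<le> length (ttgt F) \<Longrightarrow> [0..<Suc (length (ttgt F))] ! a = a" for a
    by (simp del: upt_Suc)
  then have tm: "map (\<lambda>a. tmap (theta_id C (ttgt F)) ! a) (tmap F) = tmap F"
    using tmap_le_length_ttgt[OF F] length_tmap[OF F] by (intro map_idI) (auto simp: in_set_conv_nth)
  have "theta_cmp C (theta_id C (ttgt F)) F = tmor_of (tsrc F) (ttgt F) (tmap F)
      (\<lambda>k. Cmp C (entry (theta_id C (ttgt F)) k) (entry F (block_index [0..<Suc (length (ttgt F))] k)))"
    using theta_cmp_eq_tmor_of[OF F I] tm by simp
  also have "\<dots> = tmor_of (tsrc F) (ttgt F) (tmap F) (entry F)"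
  proof (rule tmor_of_cong)
    fix i k assume i: "i < length (tsrc F)" and k: "tmap F ! i \<le> k" "k < tmap F ! Suc i"
    have "k < length (ttgt F)" using k tmap_le_length_ttgt[OF F, of "Suc i"] i by simp
    then show "Cmp C (entry (theta_id C (ttgt F)) k) (entry F (block_index [0..<Suc (length (ttgt F))] k))
        = entry F k"
      using entry_theta_id block_index_upt entry_arrow[OF F i k] categoryD(4)[OF C] by metis
  qed
  also have "\<dots> = F" using tmor_of_entry[OF F] by simp
  finally show ?thesis .
qed

lemma theta_cmp_id_right:
  assumes C: "is_category C" and F: "F \<in> theta_arrows C"
  shows "theta_cmp C F (theta_id C (tsrc F)) = F"
proof -
  have I: "theta_id C (tsrc F) \<in> theta_arrows C"
    by (rule theta_id_in_theta_arrows[OF C theta_arrowsD(1)[OF F]])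
  have tm: "map (\<lambda>a. tmap F ! a) (tmap (theta_id C (tsrc F))) = tmap F"
    by (rule nth_equalityI) (simp_all add: length_tmap[OF F] del: upt_Suc)
  have "theta_cmp C F (theta_id C (tsrc F)) = tmor_of (tsrc F) (ttgt F) (tmap F)
      (\<lambda>k. Cmp C (entry F k) (entry (theta_id C (tsrc F)) (block_index (tmap F) k)))"
    using theta_cmp_eq_tmor_of[OF I F] tm by simp
  also have "\<dots> = tmor_of (tsrc F) (ttgt F) (tmap F) (entry F)"
  proof (rule tmor_of_cong)
    fix i k assume i: "i < length (tsrc F)" and k: "tmap F ! i \<le> k" "k < tmap F ! Suc i"
    show "Cmp C (entry F k) (entry (theta_id C (tsrc F)) (block_index (tmap F) k)) = entry F k"
      unfolding block_index_eqI[OF theta_arrow_mono[OF F] i k] entry_theta_id[OF i]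
      using entry_arrow[OF F i k] categoryD(5)[OF C] by metis
  qed
  also have "\<dots> = F" using tmor_of_entry[OF F] by simp
  finally show ?thesis .
qed

lemma theta_cmp_assoc:
  assumes C: "is_category C" and F: "F \<in> theta_arrows C" and G: "G \<in> theta_arrows C"
    and H: "H \<in> theta_arrows C" and FG: "ttgt F = tsrc G" and GH: "ttgt G = tsrc H"
  shows "theta_cmp C H (theta_cmp C G F) = theta_cmp C (theta_cmp C H G) F"
proof -
  let ?m = "length (tsrc F)" and ?n = "length (tsrc G)" and ?p = "length (tsrc H)"
  let ?\<alpha> = "tmap F" and ?\<beta> = "tmap G" and ?\<gamma> = "tmap H"
  let ?\<gamma>\<beta> = "map (\<lambda>a. ?\<gamma> ! a) ?\<beta>"
  have GF: "theta_cmp C G F \<in> theta_arrows C" by (rule theta_cmp_in_theta_arrows[OF C F G FG])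
  have HG: "theta_cmp C H G \<in> theta_arrows C" by (rule theta_cmp_in_theta_arrows[OF C G H GH])
  note mono_\<beta> = theta_arrow_mono[OF G] and mono_\<gamma> = theta_arrow_mono[OF H]
  note chain_\<alpha> = theta_arrow_mono_le[OF F] and chain_\<beta> = theta_arrow_mono_le[OF G]
    and chain_\<gamma> = theta_arrow_mono_le[OF H]
  have bound_\<alpha>: "i \<le> ?m \<Longrightarrow> ?\<alpha> ! i \<le> ?n" and bound_\<beta>: "j \<le> ?n \<Longrightarrow> ?\<beta> ! j \<le> ?p" for i j
    using tmap_le_length_ttgt[OF F] tmap_le_length_ttgt[OF G] FG GH by simp_all
  have tm: "map (\<lambda>a. ?\<gamma>\<beta> ! a) ?\<alpha> = map (\<lambda>a. ?\<gamma> ! a) (map (\<lambda>a. ?\<beta> ! a) ?\<alpha>)"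
    unfolding map_map
  proof (rule map_cong[OF refl])
    fix a assume "a \<in> set ?\<alpha>"
    then have "a \<le> ?n" using bound_\<alpha> length_tmap[OF F] by (auto simp: in_set_conv_nth)
    then show "?\<gamma>\<beta> ! a = ((\<lambda>a. ?\<gamma> ! a) \<circ> (\<lambda>a. ?\<beta> ! a)) a" using length_tmap[OF G] by simp
  qed
  have "tmor_of (tsrc F) (ttgt H) (map (\<lambda>a. ?\<gamma> ! a) (map (\<lambda>a. ?\<beta> ! a) ?\<alpha>))
      (\<lambda>k. Cmp C (entry H k) (entry (theta_cmp C G F) (block_index ?\<gamma> k))) =
    tmor_of (tsrc F) (ttgt H) (map (\<lambda>a. ?\<gamma> ! a) (map (\<lambda>a. ?\<beta> ! a) ?\<alpha>))
      (\<lambda>k. Cmp C (entry (theta_cmp C H G) k) (entry F (block_index ?\<gamma>\<beta> k)))"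
  proof (rule tmor_of_cong)
    fix i k assume i: "i < ?m"
      and "map (\<lambda>a. ?\<gamma> ! a) (map (\<lambda>a. ?\<beta> ! a) ?\<alpha>) ! i \<le> k"
      and "k < map (\<lambda>a. ?\<gamma> ! a) (map (\<lambda>a. ?\<beta> ! a) ?\<alpha>) ! Suc i"
    then have k: "?\<gamma> ! (?\<beta> ! (?\<alpha> ! i)) \<le> k" "k < ?\<gamma> ! (?\<beta> ! (?\<alpha> ! Suc i))"
      using length_tmap[OF F] by auto
    have a: "?\<alpha> ! 0 \<le> ?\<alpha> ! i" "?\<alpha> ! i \<le> ?\<alpha> ! Suc i" "?\<alpha> ! Suc i \<le> ?\<alpha> ! ?m" "?\<alpha> ! ?m \<le> ?n"
      using chain_\<alpha> i bound_\<alpha> by simp_all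
    have b: "?\<beta> ! 0 \<le> ?\<beta> ! (?\<alpha> ! i)" "?\<beta> ! (?\<alpha> ! i) \<le> ?\<beta> ! (?\<alpha> ! Suc i)"
      "?\<beta> ! (?\<alpha> ! Suc i) \<le> ?\<beta> ! ?n" "?\<beta> ! ?n \<le> ?p"
      using chain_\<beta> a bound_\<beta> by simp_all
    define j where "j = block_index ?\<gamma> k"
    note j = block_index_between[OF mono_\<gamma> b(2) order_trans[OF b(3,4)] k, folded j_def]
    define i' where "i' = block_index ?\<beta> j"
    note i' = block_index_between[OF mono_\<beta> a(2) order_trans[OF a(3,4)] j(1,2), folded i'_def]
    have "?\<gamma> ! (?\<beta> ! 0) \<le> k" "k < ?\<gamma> ! (?\<beta> ! ?n)"
      using chain_\<gamma>[of "?\<beta> ! 0" "?\<beta> ! (?\<alpha> ! i)"] chain_\<gamma>[of "?\<beta> ! (?\<alpha> ! Suc i)" "?\<beta> ! ?n"] b k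
      by linarith+
    note k_range = this
    have "?\<beta> ! (?\<alpha> ! 0) \<le> j" "j < ?\<beta> ! (?\<alpha> ! ?m)"
      using chain_\<beta>[of "?\<alpha> ! 0" "?\<alpha> ! i"] chain_\<beta>[of "?\<alpha> ! Suc i" "?\<alpha> ! ?m"] a j by linarith+
    then have entry_GF: "entry (theta_cmp C G F) j = Cmp C (entry G j) (entry F i')"
      unfolding i'_def by (rule entry_theta_cmp[OF F G FG])
    have entry_HG: "entry (theta_cmp C H G) k = Cmp C (entry H k) (entry G j)"
      unfolding j_def by (rule entry_theta_cmp[OF G H GH k_range])
    have index: "block_index ?\<gamma>\<beta> k = i'"
      unfolding i'_def j_def using block_index_map_nth[OF mono_\<beta> mono_\<gamma> length_tmap[OF G] b(4) k_range] .
    have "entry F i' \<in> Ar C \<and> Dom C (entry F i') = tsrc F ! i \<and> Cod C (entry F i') = ttgt F ! i'"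
      using entry_arrow[OF F i] i' by simp
    moreover have "entry G j \<in> Ar C \<and> Dom C (entry G j) = tsrc G ! i' \<and> Cod C (entry G j) = ttgt G ! j"
      using entry_arrow[OF G _ i'(3,4)] i'(2) a by simp
    moreover have "entry H k \<in> Ar C \<and> Dom C (entry H k) = tsrc H ! j \<and> Cod C (entry H k) = ttgt H ! k"
      using entry_arrow[OF H _ j(3,4)] j(2) b by simp
    ultimately show "Cmp C (entry H k) (entry (theta_cmp C G F) (block_index ?\<gamma> k)) =
        Cmp C (entry (theta_cmp C H G) k) (entry F (block_index ?\<gamma>\<beta> k))"
      unfolding j_def[symmetric] entry_GF entry_HG index
      using categoryD(6)[OF C, of "entry F i'" "entry G j" "entry H k"] FG GH by simp
  qed
  then show ?thesis
    using theta_cmp_eq_tmor_of[OF GF H] theta_cmp_eq_tmor_of[OF F HG] GH FG tm by simp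
qed

lemma Theta_simps [simp]:
  "Ob (Theta C) = {cs. set cs \<subseteq> Ob C}" "Ar (Theta C) = theta_arrows C"
  "Dom (Theta C) = tsrc" "Cod (Theta C) = ttgt" "Cmp (Theta C) = theta_cmp C" "Id (Theta C) = theta_id C"
  unfolding Theta_def by simp_all

lemma is_category_Theta:
  assumes C: "is_category C"
  shows "is_category (Theta C)"
  unfolding is_category_def Theta_simps
  using theta_id_in_theta_arrows[OF C] theta_cmp_in_theta_arrows[OF C]
    theta_cmp_id_left[OF C] theta_cmp_id_right[OF C] theta_cmp_assoc[OF C]
  by (intro conjI ballI impI) (auto dest: theta_arrowsD(1,2))

section \<open>The inverse and direct parts of \<Theta>C\<close>

lemma mem_mmor_iff: "(c, fs) \<in> mmor C \<longleftrightarrow> c \<in> Ob C \<and> (\<forall>f\<in>set fs. f \<in> Ar C \<and> Dom C f = c)"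
  unfolding mmor_def by simp

lemma mono_family_iff_separates_points:
  "mono_family m \<alpha>s \<longleftrightarrow> (\<forall>k\<le>m. \<forall>k'\<le>m. (\<forall>\<alpha>\<in>set \<alpha>s. \<alpha> ! k = \<alpha> ! k') \<longrightarrow> k = k')"
proof
  assume mf: "mono_family m \<alpha>s"
  show "\<forall>k\<le>m. \<forall>k'\<le>m. (\<forall>\<alpha>\<in>set \<alpha>s. \<alpha> ! k = \<alpha> ! k') \<longrightarrow> k = k'"
  proof (intro allI impI)
    fix k k' assume "k \<le> m" "k' \<le> m" and "\<forall>\<alpha>\<in>set \<alpha>s. \<alpha> ! k = \<alpha> ! k'"
    then have "[k] = [k']"
      using mf unfolding mono_family_def by (elim allE[of _ 0] allE[of _ "[k]"] allE[of _ "[k']"])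
        (simp add: delta_mor_def)
    then show "k = k'" by simp
  qed
next
  assume pt: "\<forall>k\<le>m. \<forall>k'\<le>m. (\<forall>\<alpha>\<in>set \<alpha>s. \<alpha> ! k = \<alpha> ! k') \<longrightarrow> k = k'"
  show "mono_family m \<alpha>s" unfolding mono_family_def
  proof (intro allI impI)
    fix n \<beta> \<beta>' assume \<beta>: "delta_mor n m \<beta>" "delta_mor n m \<beta>'"
      and eq: "\<forall>\<alpha>\<in>set \<alpha>s. map (\<lambda>b. \<alpha> ! b) \<beta> = map (\<lambda>b. \<alpha> ! b) \<beta>'"
    show "\<beta> = \<beta>'"
    proof (rule nth_equalityI)
      show "length \<beta> = length \<beta>'" using \<beta> unfolding delta_mor_def by simp
      fix t assume t: "t < length \<beta>"
      then have "\<forall>\<alpha>\<in>set \<alpha>s. \<alpha> ! (\<beta> ! t) = \<alpha> ! (\<beta>' ! t)"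
        using eq \<beta> unfolding delta_mor_def by (metis nth_map)
      moreover have "\<beta> ! t \<le> m" "\<beta>' ! t \<le> m" using \<beta> t unfolding delta_mor_def by auto
      ultimately show "\<beta> ! t = \<beta>' ! t" using pt by blast
    qed
  qed
qed

lemma ThetaMinusD:
  assumes "F \<in> ThetaMinus C M"
  shows "F \<in> theta_arrows C" "set (tmap F) = {0..length (ttgt F)}"
    "\<And>i. i < length (tsrc F) \<Longrightarrow> tmap F ! i < tmap F ! Suc i \<Longrightarrow> tcomp F ! i ! 0 \<in> M"
  using assms unfolding ThetaMinus_def by auto

lemma ThetaMinus_tmap_0:
  assumes F: "F \<in> ThetaMinus C M"
  shows "tmap F ! 0 = 0"
proof -
  have "0 \<in> set (tmap F)" using ThetaMinusD(2)[OF F] by simp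
  then obtain t where "t < length (tmap F)" "tmap F ! t = 0" by (auto simp: in_set_conv_nth)
  then show ?thesis
    using theta_arrow_mono_le[OF ThetaMinusD(1)[OF F], of 0 t] length_tmap[OF ThetaMinusD(1)[OF F]]
    by simp
qed

lemma ThetaMinus_tmap_last:
  assumes F: "F \<in> ThetaMinus C M"
  shows "tmap F ! length (tsrc F) = length (ttgt F)"
proof -
  note A = ThetaMinusD(1)[OF F]
  have "length (ttgt F) \<in> set (tmap F)" using ThetaMinusD(2)[OF F] by simp
  then obtain t where "t < length (tmap F)" "tmap F ! t = length (ttgt F)"
    by (auto simp: in_set_conv_nth)
  then show ?thesis
    using theta_arrow_mono_le[OF A, of t "length (tsrc F)"] length_tmap[OF A]
      tmap_le_length_ttgt[OF A, of "length (tsrc F)"] by simp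
qed

lemma ThetaMinus_tmap_Suc_le:
  assumes F: "F \<in> ThetaMinus C M" and i: "i < length (tsrc F)"
  shows "tmap F ! Suc i \<le> Suc (tmap F ! i)"
proof (rule ccontr)
  note A = ThetaMinusD(1)[OF F]
  assume "\<not> tmap F ! Suc i \<le> Suc (tmap F ! i)"
  then have big: "Suc (tmap F ! i) < tmap F ! Suc i" by simp
  then have "Suc (tmap F ! i) \<in> set (tmap F)"
    using ThetaMinusD(2)[OF F] tmap_le_length_ttgt[OF A, of "Suc i"] i by simp
  then obtain t where t: "t < length (tmap F)" "tmap F ! t = Suc (tmap F ! i)"
    by (auto simp: in_set_conv_nth)
  show False
  proof (cases "t \<le> i")
    case True then show False using theta_arrow_mono_le[OF A, of t i] t i by simp
  next
    case False
    then show False using theta_arrow_mono_le[OF A, of "Suc i" t] t length_tmap[OF A] big by simp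
  qed
qed

lemma ThetaPlusD:
  assumes "(cs, Fs) \<in> ThetaPlus C P"
  shows "(cs, Fs) \<in> mmor (Theta C)" "mono_family (length cs) (map tmap Fs)"
    "\<And>i. i < length cs \<Longrightarrow> (cs ! i, concat (map (\<lambda>F. tcomp F ! i) Fs)) \<in> P"
    "\<And>F. F \<in> set Fs \<Longrightarrow> F \<in> theta_arrows C \<and> tsrc F = cs"
  using assms unfolding ThetaPlus_def mem_mmor_iff by auto

lemma ThetaPlus_tmap_increases:
  assumes "(cs, Fs) \<in> ThetaPlus C P" and i: "i < length cs"
  obtains F where "F \<in> set Fs" "tmap F ! i < tmap F ! Suc i"
proof -
  have "\<not> (\<forall>\<alpha>\<in>set (map tmap Fs). \<alpha> ! i = \<alpha> ! Suc i)"
    using ThetaPlusD(2)[OF assms(1)] i unfolding mono_family_iff_separates_points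
    by (metis Suc_leI less_imp_le_nat n_not_Suc_n)
  then obtain F where F: "F \<in> set Fs" "tmap F ! i \<noteq> tmap F ! Suc i" by auto
  moreover have "tmap F ! i \<le> tmap F ! Suc i"
    using theta_arrow_mono ThetaPlusD(4)[OF assms(1) F(1)] i by fastforce
  ultimately show ?thesis using that by simp
qed

lemma ThetaMinus_step:
  assumes F: "F \<in> ThetaMinus C M" and i: "i < length (tsrc F)"
    and ne: "tmap F ! i \<noteq> tmap F ! Suc i"
  shows "tmap F ! Suc i = Suc (tmap F ! i)" "tcomp F ! i = [tcomp F ! i ! 0]"
    "tcomp F ! i ! 0 \<in> M" "tcomp F ! i ! 0 \<in> Ar C"
    "Dom C (tcomp F ! i ! 0) = tsrc F ! i" "Cod C (tcomp F ! i ! 0) = ttgt F ! (tmap F ! i)"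
proof -
  note A = ThetaMinusD(1)[OF F]
  show step: "tmap F ! Suc i = Suc (tmap F ! i)"
    using ne ThetaMinus_tmap_Suc_le[OF F i] theta_arrow_mono[OF A] i by (metis le_SucE le_antisym)
  then have len: "length (tcomp F ! i) = 1" using theta_arrowsD(5)[OF A i] by simp
  then show "tcomp F ! i = [tcomp F ! i ! 0]" by (cases "tcomp F ! i") auto
  show "tcomp F ! i ! 0 \<in> M" using ThetaMinusD(3)[OF F i] step by simp
  show "tcomp F ! i ! 0 \<in> Ar C" "Dom C (tcomp F ! i ! 0) = tsrc F ! i"
    "Cod C (tcomp F ! i ! 0) = ttgt F ! (tmap F ! i)"
    using theta_arrowsD(6)[OF A i, of 0] len by simp_all
qed

lemma theta_id_in_ThetaMinus:
  assumes C: "is_category C" and M: "wide_subcat C M" and cs: "set cs \<subseteq> Ob C"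
  shows "theta_id C cs \<in> ThetaMinus C M"
proof -
  have "tcomp (theta_id C cs) ! i ! 0 \<in> M" if "i < length cs" for i
  proof -
    have "cs ! i \<in> Ob C" using cs nth_mem[OF that] by blast
    then show ?thesis using M that unfolding theta_id_def wide_subcat_def by simp
  qed
  then show ?thesis
    unfolding ThetaMinus_def using theta_id_in_theta_arrows[OF C cs] by (auto simp del: upt_Suc)
qed

lemma theta_cmp_in_ThetaMinus:
  assumes C: "is_category C" and M: "wide_subcat C M"
    and F: "F \<in> ThetaMinus C M" and G: "G \<in> ThetaMinus C M" and FG: "ttgt F = tsrc G"
  shows "theta_cmp C G F \<in> ThetaMinus C M"
proof -
  note AF = ThetaMinusD(1)[OF F] and AG = ThetaMinusD(1)[OF G]
  have "set (tmap (theta_cmp C G F)) = (\<lambda>a. tmap G ! a) ` {0..<length (tmap G)}"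
    using ThetaMinusD(2)[OF F] FG length_tmap[OF AG] atLeastLessThanSuc_atLeastAtMost by simp
  also have "\<dots> = set (tmap G)" by (auto simp: set_conv_nth)
  finally have surj: "set (tmap (theta_cmp C G F)) = {0..length (ttgt (theta_cmp C G F))}"
    using ThetaMinusD(2)[OF G] by simp
  have "tcomp (theta_cmp C G F) ! i ! 0 \<in> M"
    if i: "i < length (tsrc F)" and lt: "tmap G ! (tmap F ! i) < tmap G ! (tmap F ! Suc i)" for i
  proof -
    have ne: "tmap F ! i \<noteq> tmap F ! Suc i" using lt by auto
    note stepF = ThetaMinus_step[OF F i ne]
    define j where "j = tmap F ! i"
    have j: "j < length (tsrc G)"
      using tmap_le_length_ttgt[OF AF, of "Suc i"] i stepF(1) FG unfolding j_def by simp
    have "tmap G ! j \<noteq> tmap G ! Suc j" using lt stepF(1) unfolding j_def by simp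
    note stepG = ThetaMinus_step[OF G j this]
    have "tcomp (theta_cmp C G F) ! i = [Cmp C (tcomp G ! j ! 0) (tcomp F ! i ! 0)]"
    proof -
      have "zip (tcomp F ! i) [tmap F ! i..<tmap F ! Suc i] = [(tcomp F ! i ! 0, j)]"
        using stepF(1,2) unfolding j_def by (metis upt_rec lessI upt_Suc zip_Cons_Cons zip_Nil)
      moreover obtain g where "tcomp G ! j = [g]" using stepG(2) by blast
      ultimately show ?thesis unfolding tcomp_theta_cmp[OF i] by simp
    qed
    then show ?thesis
      using M stepF(3,6) stepG(3,5) FG unfolding wide_subcat_def j_def by simp
  qed
  then show ?thesis
    unfolding ThetaMinus_def using theta_cmp_in_theta_arrows[OF C AF AG FG] surj length_tmap[OF AF]
    by auto
qed

lemma wide_subcat_ThetaMinus: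
  assumes "is_category C" and "wide_subcat C M"
  shows "wide_subcat (Theta C) (ThetaMinus C M)"
  unfolding wide_subcat_def Theta_simps
  using ThetaMinusD(1) theta_id_in_ThetaMinus[OF assms] theta_cmp_in_ThetaMinus[OF assms] by blast

lemma zip_concat_map:
  "(\<forall>x\<in>set xs. length (A x) = length (B x)) \<Longrightarrow>
   zip (concat (map A xs)) (concat (map B xs)) = concat (map (\<lambda>x. zip (A x) (B x)) xs)"
  by (induction xs) (auto simp: zip_append)

lemma mset_concat_map_swap:
  "mset (concat (map (\<lambda>a. concat (map (\<lambda>b. X a b) bs)) as)) =
   mset (concat (map (\<lambda>b. concat (map (\<lambda>a. X a b) as)) bs))"
proof (induction as)
  case (Cons a as)
  have "mset (concat (map (\<lambda>b. concat (map (\<lambda>a'. X a' b) (a # as))) bs)) =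
        mset (concat (map (X a) bs)) + mset (concat (map (\<lambda>b. concat (map (\<lambda>a'. X a' b) as)) bs))"
    by (induction bs) (auto simp: algebra_simps)
  then show ?case using Cons by simp
qed (induction bs; simp)

lemma mset_concat_map_cong:
  "(\<And>x. x \<in> set xs \<Longrightarrow> mset (A x) = mset (B x)) \<Longrightarrow> mset (concat (map A xs)) = mset (concat (map B xs))"
  by (induction xs) auto

lemma mset_concat_map_eq: "mset xs = mset ys \<Longrightarrow> mset (concat (map f xs)) = mset (concat (map f ys))"
proof -
  have "mset (concat (map f zs)) = (\<Sum>x\<in>#mset zs. mset (f x))" for zs by (induction zs) auto
  then show "mset xs = mset ys \<Longrightarrow> ?thesis" by simp
qed

lemma concat_concat: "concat (concat xss) = concat (map concat xss)"
  by (induction xss) auto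

lemma mcomp_Theta:
  assumes "length gss = length fs"
  shows "mcomp (Theta C) (c, fs) gss =
    (c, concat (map (\<lambda>s. map (\<lambda>G. theta_cmp C G (fs ! s)) (gss ! s)) [0..<length fs]))"
proof -
  have "zip fs gss = map (\<lambda>s. (fs ! s, gss ! s)) [0..<length fs]"
    by (rule nth_equalityI) (simp_all add: assms)
  then show ?thesis unfolding mcomp_def by (simp add: o_def)
qed

context
  fixes C :: "('o, 'm) cat" and P c fs gss
  assumes fs: "(c, fs) \<in> ThetaPlus C P"
    and len: "length gss = length fs"
    and gss: "\<forall>s<length fs. (ttgt (fs ! s), gss ! s) \<in> ThetaPlus C P"
begin

lemma mono_family_mcomp_Theta:
  "mono_family (length c)
     (map tmap (concat (map (\<lambda>s. map (\<lambda>G. theta_cmp C G (fs ! s)) (gss ! s)) [0..<length fs])))"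
  unfolding mono_family_iff_separates_points
proof (intro allI impI)
  fix k k' assume k: "k \<le> length c" "k' \<le> length c"
    and eq: "\<forall>\<alpha>\<in>set (map tmap (concat (map (\<lambda>s. map (\<lambda>G. theta_cmp C G (fs ! s)) (gss ! s))
       [0..<length fs]))). \<alpha> ! k = \<alpha> ! k'"
  have "tmap (fs ! s) ! k = tmap (fs ! s) ! k'" if s: "s < length fs" for s
  proof -
    have F: "fs ! s \<in> theta_arrows C" "tsrc (fs ! s) = c" using ThetaPlusD(4)[OF fs] s by simp_all
    have "\<forall>\<beta>\<in>set (map tmap (gss ! s)). \<beta> ! (tmap (fs ! s) ! k) = \<beta> ! (tmap (fs ! s) ! k')"
    proof
      fix \<beta> assume "\<beta> \<in> set (map tmap (gss ! s))"
      then obtain G where G: "G \<in> set (gss ! s)" "\<beta> = tmap G" by auto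
      then have "tmap (theta_cmp C G (fs ! s)) ! k = tmap (theta_cmp C G (fs ! s)) ! k'"
        using eq s by (auto simp del: theta_cmp_simps)
      then show "\<beta> ! (tmap (fs ! s) ! k) = \<beta> ! (tmap (fs ! s) ! k')"
        using G k length_tmap[OF F(1)] F(2) by simp
    qed
    moreover have "tmap (fs ! s) ! k \<le> length (ttgt (fs ! s))" "tmap (fs ! s) ! k' \<le> length (ttgt (fs ! s))"
      using tmap_le_length_ttgt[OF F(1)] F(2) k by simp_all
    ultimately show ?thesis
      using ThetaPlusD(2)[of "ttgt (fs ! s)" "gss ! s"] gss s
      unfolding mono_family_iff_separates_points by blast
  qed
  then have "\<forall>\<alpha>\<in>set (map tmap fs). \<alpha> ! k = \<alpha> ! k'" by (auto simp: in_set_conv_nth)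
  then show "k = k'" using ThetaPlusD(2)[OF fs] k unfolding mono_family_iff_separates_points by blast
qed

text \<open>Column i of the composite consists of the composites g \<circ> f over all f in column i
  of fs and g in column j of gss ! s, where f lands in d_j.  Grouped by f, this is the
  multicomposition in C of column i of fs with those columns of gss, hence lies in C^+(*);
  the actual column lists the same arrows grouped by G instead.\<close>

lemma mcomp_columns_in_P:
  assumes P: "wide_submulticat C P" and i: "i < length c"
  shows "(c ! i, concat (map (\<lambda>s. concat (map (\<lambda>j. concat (map (\<lambda>G.
      map (\<lambda>g. Cmp C g (entry (fs ! s) j)) (tcomp G ! j)) (gss ! s)))
      [tmap (fs ! s) ! i..<tmap (fs ! s) ! Suc i])) [0..<length fs])) \<in> P"
proof -
  define blk where "blk s = [tmap (fs ! s) ! i..<tmap (fs ! s) ! Suc i]" for s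
  define fsi where "fsi = concat (map (\<lambda>s. map (entry (fs ! s)) (blk s)) [0..<length fs])"
  define gss' where "gss' = concat (map (\<lambda>s. map (\<lambda>j. concat (map (\<lambda>G. tcomp G ! j) (gss ! s)))
    (blk s)) [0..<length fs])"
  have F: "fs ! s \<in> theta_arrows C" "i < length (tsrc (fs ! s))" if "s < length fs" for s
    using ThetaPlusD(4)[OF fs] that i by simp_all
  have "map (\<lambda>F. tcomp F ! i) fs = map (\<lambda>s. tcomp (fs ! s) ! i) [0..<length fs]"
    by (rule nth_equalityI) simp_all
  then have "concat (map (\<lambda>F. tcomp F ! i) fs) = concat (map (\<lambda>s. tcomp (fs ! s) ! i) [0..<length fs])"
    by simp
  also have "\<dots> = fsi"
    unfolding fsi_def blk_def using tcomp_eq_map_entry[OF F] by (auto intro!: arg_cong[where f = concat])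
  finally have fsi: "(c ! i, fsi) \<in> P" using ThetaPlusD(3)[OF fs i] by simp
  have zip: "zip fsi gss' = concat (map (\<lambda>s. map (\<lambda>j. (entry (fs ! s) j,
      concat (map (\<lambda>G. tcomp G ! j) (gss ! s)))) (blk s)) [0..<length fs])"
    unfolding fsi_def gss'_def
    by (subst zip_concat_map) (simp_all add: zip_map1 zip_map2 zip_same_conv_map o_def)
  have cods: "(Cod C f, gs) \<in> P" if mem: "(f, gs) \<in> set (zip fsi gss')" for f gs
  proof -
    obtain s j where sj: "s < length fs" "j \<in> set (blk s)" "f = entry (fs ! s) j"
      "gs = concat (map (\<lambda>G. tcomp G ! j) (gss ! s))" using mem unfolding zip by fastforce
    then have j: "tmap (fs ! s) ! i \<le> j" "j < tmap (fs ! s) ! Suc i" unfolding blk_def by auto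
    then have "j < length (ttgt (fs ! s))"
      using tmap_le_length_ttgt[OF F(1)[OF sj(1)], of "Suc i"] F(2)[OF sj(1)] by simp
    moreover have "Cod C f = ttgt (fs ! s) ! j" using entry_arrow[OF F[OF sj(1)] j] sj(3) by simp
    ultimately show ?thesis using ThetaPlusD(3)[of "ttgt (fs ! s)" "gss ! s" C P j] gss sj(1,4) by simp
  qed
  have len': "length gss' = length fsi" unfolding fsi_def gss'_def by (simp add: length_concat o_def)
  have "mcomp C (c ! i, fsi) gss' \<in> P"
  proof (rule wide_submulticatD(3)[OF P fsi len'])
    fix t assume "t < length fsi"
    then have "(fsi ! t, gss' ! t) \<in> set (zip fsi gss')" using len' by (auto simp: in_set_zip)
    then show "(Cod C (fsi ! t), gss' ! t) \<in> P" by (rule cods)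
  qed
  moreover have "mcomp C (c ! i, fsi) gss' = (c ! i, concat (map (\<lambda>s. concat (map (\<lambda>j. concat
      (map (\<lambda>G. map (\<lambda>g. Cmp C g (entry (fs ! s) j)) (tcomp G ! j)) (gss ! s))) (blk s))) [0..<length fs]))"
    unfolding mcomp_def by (simp add: zip map_concat o_def concat_concat)
  ultimately show ?thesis unfolding blk_def by simp
qed

lemma column_mcomp_Theta_in_P:
  assumes P: "wide_submulticat C P" and i: "i < length c"
  shows "(c ! i, concat (map (\<lambda>H. tcomp H ! i)
    (concat (map (\<lambda>s. map (\<lambda>G. theta_cmp C G (fs ! s)) (gss ! s)) [0..<length fs])))) \<in> P"
proof -
  have "tcomp (theta_cmp C G (fs ! s)) ! i = concat (map (\<lambda>j. map (\<lambda>g. Cmp C g (entry (fs ! s) j))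
      (tcomp G ! j)) [tmap (fs ! s) ! i..<tmap (fs ! s) ! Suc i])" if "s < length fs" for s G
    using tcomp_theta_cmp_entry[of "fs ! s" C i G] ThetaPlusD(4)[OF fs nth_mem[OF that]] i by simp
  then have "concat (map (\<lambda>H. tcomp H ! i)
      (concat (map (\<lambda>s. map (\<lambda>G. theta_cmp C G (fs ! s)) (gss ! s)) [0..<length fs]))) =
    concat (map (\<lambda>s. concat (map (\<lambda>G. concat (map (\<lambda>j. map (\<lambda>g. Cmp C g (entry (fs ! s) j))
      (tcomp G ! j)) [tmap (fs ! s) ! i..<tmap (fs ! s) ! Suc i])) (gss ! s))) [0..<length fs])"
    by (simp add: map_concat o_def concat_concat) (intro arg_cong[where f = concat] map_cong refl, simp)
  then show ?thesis
    by (simp only:) (rule wide_submulticatD(4)[OF P mcomp_columns_in_P[OF P i]],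
        rule mset_concat_map_cong, rule mset_concat_map_swap)
qed

lemma mcomp_Theta_in_ThetaPlus:
  assumes C: "is_category C" and P: "wide_submulticat C P"
  shows "mcomp (Theta C) (c, fs) gss \<in> ThetaPlus C P"
proof -
  have "theta_cmp C G (fs ! s) \<in> theta_arrows C \<and> tsrc (theta_cmp C G (fs ! s)) = c"
    if "s < length fs" "G \<in> set (gss ! s)" for s G
  proof -
    have "(ttgt (fs ! s), gss ! s) \<in> ThetaPlus C P" using gss that(1) by simp
    then show ?thesis
      using theta_cmp_in_theta_arrows[OF C] ThetaPlusD(4)[OF fs nth_mem[OF that(1)]]
        ThetaPlusD(4)[of "ttgt (fs ! s)" "gss ! s" C P G] that(2) by simp
  qed
  moreover have "c \<in> Ob (Theta C)" using ThetaPlusD(1)[OF fs] unfolding mem_mmor_iff by simp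
  ultimately show ?thesis
    unfolding mcomp_Theta[OF len] ThetaPlus_def mem_mmor_iff
    using mono_family_mcomp_Theta column_mcomp_Theta_in_P[OF P] by auto
qed

end

lemma theta_id_in_ThetaPlus:
  assumes C: "is_category C" and P: "wide_submulticat C P" and cs: "set cs \<subseteq> Ob C"
  shows "(cs, [theta_id C cs]) \<in> ThetaPlus C P"
proof -
  have "(cs ! i, [Id C (cs ! i)]) \<in> P" if "i < length cs" for i
    using wide_submulticatD(2)[OF P] cs nth_mem[OF that] by blast
  then show ?thesis
    unfolding ThetaPlus_def mem_mmor_iff mono_family_iff_separates_points
    using theta_id_in_theta_arrows[OF C cs] cs by (simp del: upt_Suc add: theta_id_def)
qed

lemma ThetaPlus_mset_eq:
  assumes P: "wide_submulticat C P" and fs: "(c, fs) \<in> ThetaPlus C P" and eq: "mset gs = mset fs"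
  shows "(c, gs) \<in> ThetaPlus C P"
proof -
  have set_eq: "set gs = set fs" using eq by (metis set_mset_mset)
  have "mset (concat (map (\<lambda>F. tcomp F ! i) gs)) = mset (concat (map (\<lambda>F. tcomp F ! i) fs))" for i
    using mset_concat_map_eq[OF eq] .
  then have "(c ! i, concat (map (\<lambda>F. tcomp F ! i) gs)) \<in> P" if "i < length c" for i
    using wide_submulticatD(4)[OF P ThetaPlusD(3)[OF fs that]] by blast
  moreover have "mono_family (length c) (map tmap gs)"
    using ThetaPlusD(2)[OF fs] set_eq unfolding mono_family_def by simp
  moreover have "(c, gs) \<in> mmor (Theta C)" using ThetaPlusD(1)[OF fs] set_eq unfolding mem_mmor_iff by simp
  ultimately show ?thesis unfolding ThetaPlus_def by simp
qed

lemma wide_submulticat_ThetaPlus: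
  assumes C: "is_category C" and P: "wide_submulticat C P"
  shows "wide_submulticat (Theta C) (ThetaPlus C P)"
  unfolding wide_submulticat_def
proof (intro conjI allI impI ballI)
  show "ThetaPlus C P \<subseteq> mmor (Theta C)" unfolding ThetaPlus_def by blast
  show "(cs, [Id (Theta C) cs]) \<in> ThetaPlus C P" if "cs \<in> Ob (Theta C)" for cs
    using theta_id_in_ThetaPlus[OF C P] that by simp
  show "mcomp (Theta C) (c, fs) gss \<in> ThetaPlus C P"
    if "(c, fs) \<in> ThetaPlus C P" "length gss = length fs"
      "\<forall>s<length fs. (Cod (Theta C) (fs ! s), gss ! s) \<in> ThetaPlus C P" for c fs gss
    using mcomp_Theta_in_ThetaPlus[OF _ _ _ C P] that by simp
  show "(c, gs) \<in> ThetaPlus C P" if "(c, fs) \<in> ThetaPlus C P" "mset gs = mset fs" for c fs gs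
    using ThetaPlus_mset_eq[OF P] that by blast
qed

section \<open>Unique factorisation in \<Theta>C\<close>

fun unconcat :: "nat list \<Rightarrow> 'a list \<Rightarrow> 'a list list" where
  "unconcat [] ys = []"
| "unconcat (l # ls) ys = take l ys # unconcat ls (drop l ys)"

lemma length_unconcat [simp]: "length (unconcat ls ys) = length ls"
  by (induction ls arbitrary: ys) auto

lemma unconcat_concat: "concat zss = ys \<Longrightarrow> unconcat (map length zss) ys = zss"
  by (induction zss arbitrary: ys) auto

lemma map_unconcat: "map f ys = concat xss \<Longrightarrow> map (map f) (unconcat (map length xss) ys) = xss"
proof (induction xss arbitrary: ys)
  case (Cons xs xss)
  then have "take (length xs) (map f ys) = xs" "drop (length xs) (map f ys) = concat xss" by simp_all
  then show ?case using Cons.IH[of "drop (length xs) ys"] by (simp add: take_map drop_map)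
qed simp

lemma map_unconcat_nth:
  "map f ys = concat xss \<Longrightarrow> s < length xss \<Longrightarrow> map f (unconcat (map length xss) ys ! s) = xss ! s"
  using map_unconcat[of f ys xss] by (metis length_map length_unconcat nth_map)

lemma concat_unconcat: "map f ys = concat xss \<Longrightarrow> concat (unconcat (map length xss) ys) = ys"
proof (induction xss arbitrary: ys)
  case (Cons xs xss)
  then have "drop (length xs) (map f ys) = concat xss" by simp
  then have "concat (unconcat (map length xss) (drop (length xs) ys)) = drop (length xs) ys"
    using Cons.IH[of "drop (length xs) ys"] by (simp add: drop_map)
  then show ?case by simp
qed simp

lemma set_unconcat_nth: "s < length ls \<Longrightarrow> set (unconcat ls ys ! s) \<subseteq> set ys"
proof (induction ls arbitrary: ys s)
  case (Cons l ls)
  then show ?case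
    by (cases s) (auto simp: set_take_subset dest: subsetD[OF Cons.IH] in_set_dropD)
qed simp

locale multi_reedy_category =
  fixes C :: "('o, 'm) cat" and M :: "'m set" and P :: "('o \<times> 'm list) set" and deg :: "'o \<Rightarrow> nat"
  assumes multi_reedy: "multi_reedy C M P deg"
begin

lemma category: "is_category C"
  using multi_reedy unfolding multi_reedy_def by (elim conjE)

lemma wide_minus: "wide_subcat C M"
  using multi_reedy unfolding multi_reedy_def by (elim conjE)

lemma wide_plus: "wide_submulticat C P"
  using multi_reedy unfolding multi_reedy_def by (elim conjE)

lemma factorization:
  "(c, fs) \<in> mmor C \<Longrightarrow> \<exists>!(a, ps). a \<in> M \<and> Dom C a = c \<and> (Cod C a, ps) \<in> P \<and>
      map (Cod C) ps = map (Cod C) fs \<and> fs = map (\<lambda>p. Cmp C p a) ps"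
  using multi_reedy unfolding multi_reedy_def by (elim conjE) (drule (1) bspec, simp only: prod.case)

lemma deg_plus: "(c, fs) \<in> P \<Longrightarrow> deg c \<le> sum_list (map (\<lambda>f. deg (Cod C f)) fs)"
  using multi_reedy unfolding multi_reedy_def by (elim conjE) (drule (1) bspec, simp only: prod.case)

lemma deg_plus_eq_iff:
  "f \<in> Ar C \<Longrightarrow> (Dom C f, [f]) \<in> P \<Longrightarrow> deg (Dom C f) = deg (Cod C f) \<longleftrightarrow> f = Id C (Dom C f)"
  using multi_reedy unfolding multi_reedy_def by (elim conjE) (drule (1) bspec, simp)

lemma deg_minus: "f \<in> M \<Longrightarrow> deg (Cod C f) \<le> deg (Dom C f)"
  using multi_reedy unfolding multi_reedy_def by (elim conjE) (drule (1) bspec, simp)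

lemma deg_minus_eq_iff: "f \<in> M \<Longrightarrow> deg (Dom C f) = deg (Cod C f) \<longleftrightarrow> f = Id C (Dom C f)"
  using multi_reedy unfolding multi_reedy_def by (elim conjE) (drule (1) bspec, simp)

lemma minus_arrows: "M \<subseteq> Ar C" using wide_subcatD(1)[OF wide_minus] .

lemma plus_mmor: "P \<subseteq> mmor C" using wide_submulticatD(1)[OF wide_plus] .

end

locale theta_factorization = multi_reedy_category +
  fixes cs :: "'o list" and Fs :: "('o, 'm) tmor list"
  assumes family: "(cs, Fs) \<in> mmor (Theta C)"
begin

abbreviation "m \<equiv> length cs"
abbreviation "u \<equiv> length Fs"
abbreviation \<alpha> :: "nat \<Rightarrow> nat list" where "\<alpha> s \<equiv> tmap (Fs ! s)"

text \<open>The surjection \<sigma> : [m] \<rightarrow> [\<sigma> m] of the factorisation collapses every step i \<rightarrow> i + 1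
  at which no \<alpha> s moves; moving lists the steps that survive, and fiber_start ! k is the
  least element of the fibre of \<sigma> over k.\<close>

definition moves :: "nat \<Rightarrow> bool" where "moves i \<longleftrightarrow> (\<exists>s<u. \<alpha> s ! i < \<alpha> s ! Suc i)"
definition \<sigma> :: "nat \<Rightarrow> nat" where "\<sigma> i = length (filter moves [0..<i])"
definition moving :: "nat list" where "moving = filter moves [0..<m]"
definition fiber_start :: "nat list" where "fiber_start = 0 # map Suc moving"

lemma cs_Ob: "set cs \<subseteq> Ob C"
  using family unfolding mem_mmor_iff by simp

lemma family_memD: "F \<in> set Fs \<Longrightarrow> F \<in> theta_arrows C \<and> tsrc F = cs"
  using family unfolding mem_mmor_iff by simp

lemma family_arrow: "s < u \<Longrightarrow> Fs ! s \<in> theta_arrows C"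
  and family_source: "s < u \<Longrightarrow> tsrc (Fs ! s) = cs"
  using family_memD[OF nth_mem] by simp_all

lemma alpha_mono_le: "s < u \<Longrightarrow> a \<le> b \<Longrightarrow> b \<le> m \<Longrightarrow> \<alpha> s ! a \<le> \<alpha> s ! b"
  using theta_arrow_mono_le[OF family_arrow] family_source by simp

lemma length_alpha: "s < u \<Longrightarrow> length (\<alpha> s) = Suc m"
  using length_tmap[OF family_arrow] family_source by simp

lemma alpha_le_length: "s < u \<Longrightarrow> i \<le> m \<Longrightarrow> \<alpha> s ! i \<le> length (ttgt (Fs ! s))"
  using tmap_le_length_ttgt[OF family_arrow] family_source by simp

lemma alpha_eq_if_not_moves: "\<not> moves i \<Longrightarrow> s < u \<Longrightarrow> i < m \<Longrightarrow> \<alpha> s ! i = \<alpha> s ! Suc i"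
  using alpha_mono_le[of s i "Suc i"] unfolding moves_def by force

lemma sigma_0 [simp]: "\<sigma> 0 = 0"
  unfolding \<sigma>_def by simp

lemma sigma_Suc: "\<sigma> (Suc i) = \<sigma> i + (if moves i then 1 else 0)"
  unfolding \<sigma>_def by simp

lemma sigma_mono: "a \<le> b \<Longrightarrow> \<sigma> a \<le> \<sigma> b"
  using lift_Suc_mono_le[of \<sigma>] sigma_Suc by simp

lemma length_moving: "length moving = \<sigma> m"
  unfolding moving_def \<sigma>_def by simp

lemma moving_nth_sigma:
  assumes "moves i" "i < m"
  shows "moving ! \<sigma> i = i"
proof -
  have "[0..<m] = [0..<i] @ [i] @ [Suc i..<m]"
    using assms(2) upt_split3[of 0 i m] by (simp add: upt_conv_Cons)
  then have "moving = filter moves [0..<i] @ [i] @ filter moves [Suc i..<m]"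
    unfolding moving_def using assms(1) by simp
  then show ?thesis unfolding \<sigma>_def by (simp add: nth_append)
qed

lemma moving_nth:
  assumes k: "k < \<sigma> m"
  shows "moving ! k < m" "moves (moving ! k)" "\<sigma> (moving ! k) = k"
proof -
  show a: "moving ! k < m" "moves (moving ! k)"
    using nth_mem[of k moving] k length_moving unfolding moving_def by auto
  have "\<sigma> (Suc (moving ! k)) \<le> \<sigma> m" using a sigma_mono[of "Suc (moving ! k)" m] by simp
  then have "\<sigma> (moving ! k) < length moving" using a sigma_Suc[of "moving ! k"] length_moving by simp
  moreover have "distinct moving" unfolding moving_def by simp
  ultimately show "\<sigma> (moving ! k) = k"
    using moving_nth_sigma[OF a(2,1)] nth_eq_iff_index_eq k length_moving by metis
qed

lemma alpha_eq_if_sigma_eq: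
  assumes "r \<le> r'" "r' \<le> m" "\<sigma> r = \<sigma> r'" "s < u"
  shows "\<alpha> s ! r = \<alpha> s ! r'"
  using assms(1,2,3)
proof (induction r' rule: dec_induct)
  case (step t)
  have "\<sigma> r \<le> \<sigma> t" "\<sigma> t \<le> \<sigma> (Suc t)" using sigma_mono step.hyps by simp_all
  then have "\<sigma> t = \<sigma> (Suc t)" "\<sigma> r = \<sigma> t" using step.prems(2) by simp_all
  then have "\<not> moves t" using sigma_Suc[of t] by (auto split: if_splits)
  then show ?case using step alpha_eq_if_not_moves[OF _ assms(4)] \<open>\<sigma> r = \<sigma> t\<close> by simp
qed simp

lemma length_fiber_start: "length fiber_start = Suc (\<sigma> m)"
  unfolding fiber_start_def using length_moving by simp

lemma fiber_start_Suc: "k < \<sigma> m \<Longrightarrow> fiber_start ! Suc k = Suc (moving ! k)"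
  unfolding fiber_start_def using length_moving by simp

lemma fiber_start_nth:
  assumes "k \<le> \<sigma> m"
  shows "fiber_start ! k \<le> m" "\<sigma> (fiber_start ! k) = k"
proof -
  have "fiber_start ! k \<le> m \<and> \<sigma> (fiber_start ! k) = k"
  proof (cases k)
    case (Suc k')
    then have "k' < \<sigma> m" using assms by simp
    then show ?thesis
      using fiber_start_Suc moving_nth[of k'] sigma_Suc[of "moving ! k'"] Suc by (simp add: Suc_leI)
  qed (simp add: fiber_start_def)
  then show "fiber_start ! k \<le> m" "\<sigma> (fiber_start ! k) = k" by simp_all
qed

lemma fiber_start_le:
  assumes i: "i \<le> m"
  shows "fiber_start ! \<sigma> i \<le> i"
proof (cases "\<sigma> i")
  case (Suc k)
  then have k: "k < \<sigma> m" using sigma_mono[OF i] by simp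
  have "\<not> i \<le> moving ! k" using sigma_mono[of i "moving ! k"] moving_nth(3)[OF k] Suc by auto
  then show ?thesis using fiber_start_Suc[OF k] Suc by simp
qed (simp add: fiber_start_def)

lemma alpha_fiber_start_sigma: "i \<le> m \<Longrightarrow> s < u \<Longrightarrow> \<alpha> s ! (fiber_start ! \<sigma> i) = \<alpha> s ! i"
  using alpha_eq_if_sigma_eq fiber_start_nth(2) fiber_start_le sigma_mono by simp

lemma alpha_fiber_start_moving:
  assumes "k < \<sigma> m" "s < u"
  shows "\<alpha> s ! (fiber_start ! k) = \<alpha> s ! (moving ! k)"
  using alpha_fiber_start_sigma[of "moving ! k" s] moving_nth[OF assms(1)] assms(2) by simp

definition column :: "nat \<Rightarrow> 'm list" where "column i = concat (map (\<lambda>F. tcomp F ! i) Fs)"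

definition factors_column :: "nat \<Rightarrow> 'm \<Rightarrow> 'm list \<Rightarrow> bool" where
  "factors_column i a ps \<longleftrightarrow> a \<in> M \<and> Dom C a = cs ! i \<and> (Cod C a, ps) \<in> P \<and>
      map (Cod C) ps = map (Cod C) (column i) \<and> column i = map (\<lambda>p. Cmp C p a) ps"

definition column_fact :: "nat \<Rightarrow> 'm \<times> 'm list" where
  "column_fact i = (THE x. factors_column i (fst x) (snd x))"

abbreviation "column_minus i \<equiv> fst (column_fact i)"
abbreviation "column_plus i \<equiv> snd (column_fact i)"

lemma column_mmor:
  assumes i: "i < m"
  shows "(cs ! i, column i) \<in> mmor C"
  unfolding mem_mmor_iff
proof (intro conjI ballI)
  show "cs ! i \<in> Ob C" using cs_Ob i by auto
  fix f assume "f \<in> set (column i)"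
  then obtain F k where F: "F \<in> set Fs" "k < length (tcomp F ! i)" "f = tcomp F ! i ! k"
    unfolding column_def by (auto simp: in_set_conv_nth)
  then show "f \<in> Ar C" "Dom C f = cs ! i" using theta_arrowsD(6)[of F C i k] family_memD i by auto
qed

lemma column_fact_ex1: "i < m \<Longrightarrow> \<exists>!x. factors_column i (fst x) (snd x)"
  using factorization[OF column_mmor] unfolding factors_column_def case_prod_beta .

lemma column_fact_spec: "i < m \<Longrightarrow> factors_column i (column_minus i) (column_plus i)"
  unfolding column_fact_def using theI'[OF column_fact_ex1] by simp

lemma column_fact_eqI: "i < m \<Longrightarrow> factors_column i a ps \<Longrightarrow> column_fact i = (a, ps)"
  unfolding column_fact_def by (rule the1_equality[OF column_fact_ex1]) simp_all

lemma column_factD: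
  assumes i: "i < m"
  shows "column_minus i \<in> M" "column_minus i \<in> Ar C" "Dom C (column_minus i) = cs ! i"
    "(Cod C (column_minus i), column_plus i) \<in> P"
    "column i = map (\<lambda>p. Cmp C p (column_minus i)) (column_plus i)"
  using column_fact_spec[OF i] minus_arrows unfolding factors_column_def by auto

lemma column_plus_arrow:
  "i < m \<Longrightarrow> p \<in> set (column_plus i) \<Longrightarrow> p \<in> Ar C \<and> Dom C p = Cod C (column_minus i)"
  using column_factD(4) plus_mmor unfolding mmor_def by auto

definition mid :: "'o list" where "mid = map (\<lambda>i. Cod C (column_minus i)) moving"

lemma length_mid: "length mid = \<sigma> m"
  unfolding mid_def using length_moving by simp

lemma mid_nth: "k < \<sigma> m \<Longrightarrow> mid ! k = Cod C (column_minus (moving ! k))"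
  unfolding mid_def using length_moving by simp

lemma mid_Ob: "set mid \<subseteq> Ob C"
  unfolding mid_def moving_def using column_factD(2) categoryD(1)[OF category] by auto

definition minus_part :: "('o, 'm) tmor" where
  "minus_part = \<lparr>tsrc = cs, ttgt = mid, tmap = map \<sigma> [0..<Suc m],
     tcomp = map (\<lambda>i. if moves i then [column_minus i] else []) [0..<m]\<rparr>"

lemma minus_part_simps [simp]:
  "tsrc minus_part = cs" "ttgt minus_part = mid" "tmap minus_part = map \<sigma> [0..<Suc m]"
  unfolding minus_part_def by simp_all

lemma nth_map_sigma: "i \<le> m \<Longrightarrow> map \<sigma> [0..<Suc m] ! i = \<sigma> i"
  by (simp del: upt_Suc)

lemma tcomp_minus_part: "i < m \<Longrightarrow> tcomp minus_part ! i = (if moves i then [column_minus i] else [])"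
  unfolding minus_part_def by simp

lemma minus_part_arrow: "minus_part \<in> theta_arrows C"
  unfolding theta_arrows_def
proof (intro CollectI conjI allI impI)
  show "set (tsrc minus_part) \<subseteq> Ob C" "set (ttgt minus_part) \<subseteq> Ob C" using cs_Ob mid_Ob by simp_all
  show "delta_mor (length (tsrc minus_part)) (length (ttgt minus_part)) (tmap minus_part)"
    unfolding delta_mor_def using nth_map_sigma sigma_Suc sigma_mono length_mid by (simp del: upt_Suc)
  show "length (tcomp minus_part) = length (tsrc minus_part)" unfolding minus_part_def by simp
  fix i assume "i < length (tsrc minus_part)"
  then have i: "i < m" by simp
  show "length (tcomp minus_part ! i) = tmap minus_part ! Suc i - tmap minus_part ! i"
    using tcomp_minus_part[OF i] nth_map_sigma[of i] nth_map_sigma[of "Suc i"] i sigma_Suc[of i] by simp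
  fix k assume "k < length (tcomp minus_part ! i)"
  then have moves: "moves i" "k = 0" using tcomp_minus_part[OF i] by (auto split: if_splits)
  then have "\<sigma> i < \<sigma> m" using sigma_mono[of "Suc i" m] i sigma_Suc[of i] by simp
  then show "tcomp minus_part ! i ! k \<in> Ar C" "Dom C (tcomp minus_part ! i ! k) = tsrc minus_part ! i"
    "Cod C (tcomp minus_part ! i ! k) = ttgt minus_part ! (tmap minus_part ! i + k)"
    using tcomp_minus_part[OF i] moves column_factD[OF i] mid_nth moving_nth_sigma[OF moves(1) i]
      nth_map_sigma[of i] i by simp_all
qed

lemma minus_part_in_ThetaMinus: "minus_part \<in> ThetaMinus C M"
  unfolding ThetaMinus_def
proof (intro CollectI conjI allI impI)
  show "minus_part \<in> theta_arrows C" by (rule minus_part_arrow)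
  have "\<sigma> ` {0..m} = {0..\<sigma> m}"
  proof
    show "\<sigma> ` {0..m} \<subseteq> {0..\<sigma> m}" using sigma_mono by auto
    show "{0..\<sigma> m} \<subseteq> \<sigma> ` {0..m}"
    proof
      fix v assume v: "v \<in> {0..\<sigma> m}"
      show "v \<in> \<sigma> ` {0..m}"
      proof (cases "v = \<sigma> m")
        case False
        then have "v < \<sigma> m" using v by simp
        then show ?thesis using moving_nth(1,3)[of v] by (intro image_eqI[of _ _ "moving ! v"]) auto
      qed auto
    qed
  qed
  then show "set (tmap minus_part) = {0..length (ttgt minus_part)}"
    using length_mid by (simp add: atLeastLessThanSuc_atLeastAtMost del: upt_Suc)
  fix i assume "i < length (tsrc minus_part)" and lt: "tmap minus_part ! i < tmap minus_part ! Suc i"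
  then have i: "i < m" by simp
  then have "moves i" using lt nth_map_sigma[of i] nth_map_sigma[of "Suc i"] sigma_Suc[of i]
    by (auto split: if_splits)
  then show "tcomp minus_part ! i ! 0 \<in> M" using tcomp_minus_part[OF i] column_factD(1)[OF i] by simp
qed

text \<open>The s-th plus part takes, at each surviving step i, the s-th block of column_plus i,
  namely the block composing with column_minus i to the components of Fs ! s at i.\<close>

definition column_lengths :: "nat \<Rightarrow> nat list" where
  "column_lengths i = map (\<lambda>F. length (tcomp F ! i)) Fs"

definition plus_part :: "nat \<Rightarrow> ('o, 'm) tmor" where
  "plus_part s = \<lparr>tsrc = mid, ttgt = ttgt (Fs ! s), tmap = map (\<lambda>r. \<alpha> s ! r) fiber_start,
     tcomp = map (\<lambda>k. unconcat (column_lengths (moving ! k)) (column_plus (moving ! k)) ! s) [0..<\<sigma> m]\<rparr>"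

definition plus_parts :: "('o, 'm) tmor list" where "plus_parts = map plus_part [0..<u]"

lemma plus_part_simps [simp]:
  "tsrc (plus_part s) = mid" "ttgt (plus_part s) = ttgt (Fs ! s)"
  "tmap (plus_part s) = map (\<lambda>r. \<alpha> s ! r) fiber_start"
  unfolding plus_part_def by simp_all

lemma tmap_plus_part: "k \<le> \<sigma> m \<Longrightarrow> tmap (plus_part s) ! k = \<alpha> s ! (fiber_start ! k)"
  using length_fiber_start by simp

lemma tcomp_plus_part:
  "k < \<sigma> m \<Longrightarrow>
    tcomp (plus_part s) ! k = unconcat (column_lengths (moving ! k)) (column_plus (moving ! k)) ! s"
  unfolding plus_part_def by simp

lemma map_cmp_tcomp_plus_part:
  assumes k: "k < \<sigma> m" and s: "s < u"
  shows "map (\<lambda>p. Cmp C p (column_minus (moving ! k))) (tcomp (plus_part s) ! k) =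
    tcomp (Fs ! s) ! (moving ! k)"
  using map_unconcat_nth[OF column_factD(5)[OF moving_nth(1)[OF k], unfolded column_def, symmetric]] s
  unfolding tcomp_plus_part[OF k] column_lengths_def by (simp add: o_def)

lemma set_tcomp_plus_part:
  "k < \<sigma> m \<Longrightarrow> s < u \<Longrightarrow> set (tcomp (plus_part s) ! k) \<subseteq> set (column_plus (moving ! k))"
  using set_unconcat_nth[of s "column_lengths (moving ! k)"] tcomp_plus_part
  unfolding column_lengths_def by simp

lemma delta_mor_plus_part:
  assumes s: "s < u"
  shows "delta_mor (\<sigma> m) (length (ttgt (Fs ! s))) (tmap (plus_part s))"
  unfolding delta_mor_def
proof (intro conjI allI impI)
  show "length (tmap (plus_part s)) = Suc (\<sigma> m)" using length_fiber_start by simp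
  fix k
  show "tmap (plus_part s) ! k \<le> tmap (plus_part s) ! Suc k" if k: "k < \<sigma> m"
    using tmap_plus_part alpha_fiber_start_moving[OF k s] fiber_start_Suc[OF k] alpha_mono_le[OF s]
      moving_nth(1)[OF k] k by simp
  show "tmap (plus_part s) ! k \<le> length (ttgt (Fs ! s))" if k: "k \<le> \<sigma> m"
    using tmap_plus_part[OF k] fiber_start_nth(1)[OF k] alpha_le_length[OF s] by simp
qed

lemma plus_part_arrow:
  assumes s: "s < u"
  shows "plus_part s \<in> theta_arrows C"
  unfolding theta_arrows_def
proof (intro CollectI conjI allI impI)
  show "set (tsrc (plus_part s)) \<subseteq> Ob C" "set (ttgt (plus_part s)) \<subseteq> Ob C"
    using mid_Ob theta_arrowsD(2)[OF family_arrow[OF s]] by simp_all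
  show "delta_mor (length (tsrc (plus_part s))) (length (ttgt (plus_part s))) (tmap (plus_part s))"
    using delta_mor_plus_part[OF s] length_mid by simp
  show "length (tcomp (plus_part s)) = length (tsrc (plus_part s))"
    unfolding plus_part_def using length_mid by simp
  fix k assume "k < length (tsrc (plus_part s))"
  then have k: "k < \<sigma> m" using length_mid by simp
  define i where "i = moving ! k"
  have i: "i < m" "moves i" "\<sigma> i = k" using moving_nth[OF k] unfolding i_def by auto
  note F = family_arrow[OF s] and map_cmp = map_cmp_tcomp_plus_part[OF k s, folded i_def]
  have tmap: "tmap (plus_part s) ! k = \<alpha> s ! i" "tmap (plus_part s) ! Suc k = \<alpha> s ! Suc i"
    using tmap_plus_part[of k s] tmap_plus_part[of "Suc k" s] alpha_fiber_start_moving[OF k s]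
      fiber_start_Suc[OF k] k unfolding i_def by simp_all
  have len: "length (tcomp (plus_part s) ! k) = length (tcomp (Fs ! s) ! i)"
    using arg_cong[OF map_cmp, of length] by simp
  then show "length (tcomp (plus_part s) ! k) = tmap (plus_part s) ! Suc k - tmap (plus_part s) ! k"
    using theta_arrowsD(5)[OF F] family_source[OF s] i tmap by simp
  fix r assume r: "r < length (tcomp (plus_part s) ! k)"
  then have p: "tcomp (plus_part s) ! k ! r \<in> Ar C \<and>
      Dom C (tcomp (plus_part s) ! k ! r) = Cod C (column_minus i)"
    using column_plus_arrow[OF i(1)] set_tcomp_plus_part[OF k s] unfolding i_def by force
  have "Cod C (Cmp C (tcomp (plus_part s) ! k ! r) (column_minus i)) = ttgt (Fs ! s) ! (\<alpha> s ! i + r)"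
    using arg_cong[OF map_cmp, of "\<lambda>l. l ! r"] theta_arrowsD(6)[OF F, of i r] family_source[OF s] i r len
    by simp
  then show "tcomp (plus_part s) ! k ! r \<in> Ar C"
    "Dom C (tcomp (plus_part s) ! k ! r) = tsrc (plus_part s) ! k"
    "Cod C (tcomp (plus_part s) ! k ! r) = ttgt (plus_part s) ! (tmap (plus_part s) ! k + r)"
    using p tmap mid_nth[OF k] categoryD(3)[OF category, of "column_minus i"] column_factD(2)[OF i(1)]
    unfolding i_def by simp_all
qed

lemma length_plus_parts [simp]: "length plus_parts = u"
  unfolding plus_parts_def by simp

lemma plus_parts_nth: "s < u \<Longrightarrow> plus_parts ! s = plus_part s"
  unfolding plus_parts_def by simp

lemma plus_parts_separate:
  assumes k: "k < k'" "k' \<le> \<sigma> m"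
  obtains s where "s < u" "tmap (plus_part s) ! k < tmap (plus_part s) ! k'"
proof -
  define t where "t = moving ! (k' - 1)"
  have t: "t < m" "moves t" "\<sigma> t = k' - 1" "fiber_start ! k' = Suc t"
    using moving_nth[of "k' - 1"] fiber_start_Suc[of "k' - 1"] k unfolding t_def by auto
  obtain s where s: "s < u" "\<alpha> s ! t < \<alpha> s ! Suc t" using t(2) unfolding moves_def by auto
  have "\<not> Suc t \<le> fiber_start ! k"
    using sigma_mono[of "Suc t" "fiber_start ! k"] fiber_start_nth[of k] sigma_Suc[of t] t k by auto
  then have "\<alpha> s ! (fiber_start ! k) \<le> \<alpha> s ! t" using alpha_mono_le[OF s(1)] t by simp
  then show ?thesis using that[OF s(1)] s tmap_plus_part t k by simp
qed

lemma mono_family_plus_parts: "mono_family (\<sigma> m) (map tmap plus_parts)"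
  unfolding mono_family_iff_separates_points
proof (intro allI impI)
  fix k k' assume k: "k \<le> \<sigma> m" "k' \<le> \<sigma> m" and eq: "\<forall>\<beta>\<in>set (map tmap plus_parts). \<beta> ! k = \<beta> ! k'"
  then have "tmap (plus_part s) ! k = tmap (plus_part s) ! k'" if "s < u" for s
    using that unfolding plus_parts_def by auto
  then show "k = k'" using plus_parts_separate k by (metis less_irrefl linorder_cases)
qed

lemma column_plus_parts:
  assumes k: "k < \<sigma> m"
  shows "concat (map (\<lambda>F. tcomp F ! k) plus_parts) = column_plus (moving ! k)"
proof -
  define i where "i = moving ! k"
  have "map (\<lambda>F. tcomp F ! k) plus_parts = unconcat (column_lengths i) (column_plus i)"
    unfolding plus_parts_def i_def using tcomp_plus_part[OF k]
    by (intro nth_equalityI) (simp_all add: column_lengths_def)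
  also have "concat \<dots> = column_plus i"
    using concat_unconcat[of "\<lambda>p. Cmp C p (column_minus i)" "column_plus i" "map (\<lambda>F. tcomp F ! i) Fs"]
      column_factD(5)[OF moving_nth(1)[OF k]]
    unfolding column_lengths_def column_def i_def by (simp add: o_def)
  finally show ?thesis unfolding i_def .
qed

lemma plus_parts_in_ThetaPlus: "(mid, plus_parts) \<in> ThetaPlus C P"
  unfolding ThetaPlus_def mem_mmor_iff Theta_simps
  using mid_Ob plus_part_arrow mono_family_plus_parts column_plus_parts column_factD(4)
    moving_nth(1) mid_nth length_mid
  by (auto simp: plus_parts_def)

lemma tcomp_plus_part_cmp_minus_part:
  assumes s: "s < u" and i: "i < m"
  shows "tcomp (theta_cmp C (plus_part s) minus_part) ! i = tcomp (Fs ! s) ! i"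
proof (cases "moves i")
  case True
  then have "\<sigma> i < \<sigma> m" using sigma_mono[of "Suc i" m] i sigma_Suc[of i] by simp
  moreover have "tcomp (theta_cmp C (plus_part s) minus_part) ! i =
      map (\<lambda>g. Cmp C g (column_minus i)) (tcomp (plus_part s) ! \<sigma> i)"
    using tcomp_theta_cmp[of i minus_part C "plus_part s"] i tcomp_minus_part[OF i] True
      nth_map_sigma[of i] nth_map_sigma[of "Suc i"] sigma_Suc[of i] by simp
  ultimately show ?thesis using map_cmp_tcomp_plus_part[OF _ s] moving_nth_sigma[OF True i] by metis
next
  case False
  then have "length (tcomp (Fs ! s) ! i) = 0"
    using theta_arrowsD(5)[OF family_arrow[OF s], of i] family_source[OF s] i
      alpha_eq_if_not_moves[OF _ s i]
    by simp
  then show ?thesis using tcomp_theta_cmp[of i minus_part C "plus_part s"] i tcomp_minus_part[OF i] False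
    by simp
qed

lemma plus_part_cmp_minus_part:
  assumes s: "s < u"
  shows "theta_cmp C (plus_part s) minus_part = Fs ! s"
proof (rule tmor.equality)
  show "tmap (theta_cmp C (plus_part s) minus_part) = tmap (Fs ! s)"
  proof (rule nth_equalityI)
    fix i assume "i < length (tmap (theta_cmp C (plus_part s) minus_part))"
    then have i: "i \<le> m" by simp
    then show "tmap (theta_cmp C (plus_part s) minus_part) ! i = tmap (Fs ! s) ! i"
      using nth_map_sigma[OF i] tmap_plus_part[of "\<sigma> i" s] sigma_mono[OF i]
        alpha_fiber_start_sigma[OF i s] by (simp del: upt_Suc)
  qed (simp add: length_alpha[OF s])
  show "tcomp (theta_cmp C (plus_part s) minus_part) = tcomp (Fs ! s)"
    using tcomp_plus_part_cmp_minus_part[OF s] theta_arrowsD(4)[OF family_arrow[OF s]] family_source[OF s]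
    by (intro nth_equalityI) (simp_all add: theta_cmp_def)
qed (simp_all add: family_source[OF s])

end

locale theta_factorization_unique = theta_factorization +
  fixes A and Qs
  assumes A: "A \<in> ThetaMinus C M" and tsrc_A: "tsrc A = cs"
    and Qs: "(ttgt A, Qs) \<in> ThetaPlus C P"
    and ttgt_Qs: "map ttgt Qs = map ttgt Fs"
    and Fs_eq: "Fs = map (\<lambda>Q. theta_cmp C Q A) Qs"
begin

lemma A_arrow: "A \<in> theta_arrows C" using ThetaMinusD(1)[OF A] .

lemma length_Qs: "length Qs = u" using Fs_eq by simp

lemma Qs_nth: "s < u \<Longrightarrow> Qs ! s \<in> theta_arrows C \<and> tsrc (Qs ! s) = ttgt A"
  using ThetaPlusD(4)[OF Qs nth_mem] length_Qs by simp

lemma Fs_nth: "s < u \<Longrightarrow> Fs ! s = theta_cmp C (Qs ! s) A"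
  using Fs_eq by (metis length_map nth_map)

lemma alpha_eq: "s < u \<Longrightarrow> i \<le> m \<Longrightarrow> \<alpha> s ! i = tmap (Qs ! s) ! (tmap A ! i)"
  using Fs_nth length_tmap[OF A_arrow] tsrc_A by simp

lemma tmap_A_nth: "i \<le> m \<Longrightarrow> tmap A ! i = \<sigma> i"
proof (induction i)
  case 0
  then show ?case using ThetaMinus_tmap_0[OF A] by simp
next
  case (Suc i)
  then have i: "i < m" and IH: "tmap A ! i = \<sigma> i" by simp_all
  show ?case
  proof (cases "moves i")
    case True
    then obtain s where "s < u" "\<alpha> s ! i < \<alpha> s ! Suc i" unfolding moves_def by auto
    then have "tmap A ! i \<noteq> tmap A ! Suc i" using alpha_eq i by fastforce
    then have "tmap A ! Suc i = Suc (tmap A ! i)" using ThetaMinus_step(1)[OF A] i tsrc_A by simp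
    then show ?thesis using IH sigma_Suc[of i] True by simp
  next
    case False
    have "tmap (Qs ! s) ! (tmap A ! i) = tmap (Qs ! s) ! (tmap A ! Suc i)" if "s < u" for s
      using alpha_eq[OF that, of i] alpha_eq[OF that, of "Suc i"] alpha_eq_if_not_moves[OF False that i] i
      by simp
    then have "\<forall>\<beta>\<in>set (map tmap Qs). \<beta> ! (tmap A ! i) = \<beta> ! (tmap A ! Suc i)"
      using length_Qs by (auto simp: in_set_conv_nth)
    then have "tmap A ! i = tmap A ! Suc i"
      using ThetaPlusD(2)[OF Qs] tmap_le_length_ttgt[OF A_arrow] i tsrc_A
      unfolding mono_family_iff_separates_points by simp
    then show ?thesis using IH sigma_Suc[of i] False by simp
  qed
qed

lemma tmap_A: "tmap A = map \<sigma> [0..<Suc m]"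
  by (rule nth_equalityI) (use length_tmap[OF A_arrow] tsrc_A tmap_A_nth in \<open>simp_all del: upt_Suc\<close>)

lemma length_ttgt_A: "length (ttgt A) = \<sigma> m"
  using ThetaMinus_tmap_last[OF A] tmap_A_nth[of m] tsrc_A by simp

lemma moving_A:
  assumes i: "i < m" and moves: "moves i"
  shows "tcomp A ! i = [tcomp A ! i ! 0]"
    "tcomp A ! i ! 0 \<in> M" "Dom C (tcomp A ! i ! 0) = cs ! i" "Cod C (tcomp A ! i ! 0) = ttgt A ! \<sigma> i"
    "tcomp (theta_cmp C Q A) ! i = map (\<lambda>g. Cmp C g (tcomp A ! i ! 0)) (tcomp Q ! \<sigma> i)"
proof -
  have "tmap A ! i \<noteq> tmap A ! Suc i"
    using tmap_A_nth[of i] tmap_A_nth[of "Suc i"] i sigma_Suc[of i] moves by simp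
  note step = ThetaMinus_step[OF A _ this, unfolded tsrc_A, OF i]
  show A_i: "tcomp A ! i = [tcomp A ! i ! 0]" "tcomp A ! i ! 0 \<in> M" "Dom C (tcomp A ! i ! 0) = cs ! i"
    "Cod C (tcomp A ! i ! 0) = ttgt A ! \<sigma> i"
    using step tmap_A_nth[of i] i by simp_all
  have "[tmap A ! i..<tmap A ! Suc i] = [\<sigma> i]" using step(1) tmap_A_nth[of i] i by simp
  then have "zip (tcomp A ! i) [tmap A ! i..<tmap A ! Suc i] = [(tcomp A ! i ! 0, \<sigma> i)]"
    by (subst A_i(1)) simp
  then show "tcomp (theta_cmp C Q A) ! i = map (\<lambda>g. Cmp C g (tcomp A ! i ! 0)) (tcomp Q ! \<sigma> i)"
    using tcomp_theta_cmp[of i A C Q] tsrc_A i by simp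
qed

lemma column_fact_moving:
  assumes i: "i < m" and moves: "moves i"
  shows "column_fact i = (tcomp A ! i ! 0, concat (map (\<lambda>Q. tcomp Q ! \<sigma> i) Qs))"
proof (rule column_fact_eqI[OF i])
  let ?a = "tcomp A ! i ! 0" and ?ps = "concat (map (\<lambda>Q. tcomp Q ! \<sigma> i) Qs)"
  note A_i = moving_A[OF i moves]
  have "\<sigma> i < length (ttgt A)" using sigma_mono[of "Suc i" m] i sigma_Suc[of i] moves length_ttgt_A by simp
  then have ps: "(Cod C ?a, ?ps) \<in> P" using ThetaPlusD(3)[OF Qs] A_i(4) by simp
  have "column i = concat (map (\<lambda>Q. tcomp (theta_cmp C Q A) ! i) Qs)"
    unfolding column_def by (subst Fs_eq) (simp add: o_def)
  also have "\<dots> = map (\<lambda>g. Cmp C g ?a) ?ps" using A_i(5) by (simp add: map_concat o_def)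
  finally have column: "column i = map (\<lambda>g. Cmp C g ?a) ?ps" .
  have "Cod C (Cmp C g ?a) = Cod C g" if "g \<in> set ?ps" for g
  proof -
    have "g \<in> Ar C" "Dom C g = Cod C ?a" using ps plus_mmor that unfolding mmor_def by auto
    moreover have "?a \<in> Ar C" using A_i(2) minus_arrows by blast
    ultimately show ?thesis using categoryD(3)[OF category, of ?a g] by simp
  qed
  then have "map (Cod C) ?ps = map (Cod C) (column i)" unfolding column by simp
  then show "factors_column i ?a ?ps" unfolding factors_column_def using A_i(2,3) ps column by simp
qed

lemma tcomp_A: "tcomp A = tcomp minus_part"
proof (rule nth_equalityI)
  show "length (tcomp A) = length (tcomp minus_part)"
    using theta_arrowsD(4)[OF A_arrow] theta_arrowsD(4)[OF minus_part_arrow] tsrc_A by simp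
  fix i assume "i < length (tcomp A)"
  then have i: "i < m" using theta_arrowsD(4)[OF A_arrow] tsrc_A by simp
  show "tcomp A ! i = tcomp minus_part ! i"
  proof (cases "moves i")
    case True
    then show ?thesis
      using moving_A(1)[OF i True] column_fact_moving[OF i True] tcomp_minus_part[OF i] by simp
  next
    case False
    have "length (tcomp A ! i) = 0"
      using theta_arrowsD(5)[OF A_arrow, of i] tsrc_A i tmap_A_nth[of i] tmap_A_nth[of "Suc i"]
        sigma_Suc[of i] False by simp
    then show ?thesis using tcomp_minus_part[OF i] False by simp
  qed
qed

lemma ttgt_A: "ttgt A = mid"
proof (rule nth_equalityI)
  show "length (ttgt A) = length mid" using length_ttgt_A length_mid by simp
  fix k assume "k < length (ttgt A)"
  then have k: "k < \<sigma> m" using length_ttgt_A by simp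
  then have i: "moving ! k < m" "moves (moving ! k)" "\<sigma> (moving ! k) = k" using moving_nth by auto
  then show "ttgt A ! k = mid ! k"
    using mid_nth[OF k] column_fact_moving[OF i(1,2)] moving_A(4)[OF i(1,2)] by simp
qed

lemma A_eq_minus_part: "A = minus_part"
  by (rule tmor.equality) (simp_all add: tsrc_A tmap_A tcomp_A ttgt_A)

lemma tmap_Qs_nth: assumes s: "s < u" shows "tmap (Qs ! s) = tmap (plus_part s)"
proof (rule nth_equalityI)
  show "length (tmap (Qs ! s)) = length (tmap (plus_part s))"
    using length_tmap[of "Qs ! s" C] Qs_nth[OF s] length_ttgt_A length_fiber_start by simp
  fix k assume "k < length (tmap (Qs ! s))"
  then have k: "k \<le> \<sigma> m" using length_tmap[of "Qs ! s" C] Qs_nth[OF s] length_ttgt_A by simp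
  have "\<alpha> s ! (fiber_start ! k) = tmap (Qs ! s) ! k"
    using alpha_eq[OF s, of "fiber_start ! k"] tmap_A_nth[of "fiber_start ! k"] fiber_start_nth[OF k]
    by simp
  then show "tmap (Qs ! s) ! k = tmap (plus_part s) ! k" using tmap_plus_part[OF k] by simp
qed

lemma tcomp_Qs_nth: assumes s: "s < u" shows "tcomp (Qs ! s) = tcomp (plus_part s)"
proof (rule nth_equalityI)
  show "length (tcomp (Qs ! s)) = length (tcomp (plus_part s))"
    using theta_arrowsD(4)[of "Qs ! s" C] Qs_nth[OF s] length_ttgt_A by (simp add: plus_part_def)
  fix k assume "k < length (tcomp (Qs ! s))"
  then have k: "k < \<sigma> m" using theta_arrowsD(4)[of "Qs ! s" C] Qs_nth[OF s] length_ttgt_A by simp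
  define i where "i = moving ! k"
  have i: "i < m" "moves i" "\<sigma> i = k" using moving_nth[OF k] unfolding i_def by auto
  have "map (\<lambda>F. tcomp F ! i) Fs = map (\<lambda>Q. map (\<lambda>g. Cmp C g (tcomp A ! i ! 0)) (tcomp Q ! k)) Qs"
    by (subst Fs_eq) (simp add: o_def moving_A(5)[OF i(1,2)] i(3))
  then have "map length (map (\<lambda>F. tcomp F ! i) Fs) =
      map length (map (\<lambda>Q. map (\<lambda>g. Cmp C g (tcomp A ! i ! 0)) (tcomp Q ! k)) Qs)" by (rule arg_cong)
  then have lengths: "column_lengths i = map length (map (\<lambda>Q. tcomp Q ! k) Qs)"
    unfolding column_lengths_def by (simp add: o_def)
  have "tcomp (plus_part s) ! k = unconcat (column_lengths i) (concat (map (\<lambda>Q. tcomp Q ! k) Qs)) ! s"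
    using tcomp_plus_part[OF k] column_fact_moving[OF i(1,2)] i(3) unfolding i_def by simp
  also have "\<dots> = tcomp (Qs ! s) ! k"
    unfolding lengths by (subst unconcat_concat) (simp_all add: s length_Qs)
  finally show "tcomp (Qs ! s) ! k = tcomp (plus_part s) ! k" by simp
qed

lemma Qs_eq_plus_parts: "Qs = plus_parts"
proof (rule nth_equalityI)
  show "length Qs = length plus_parts" using length_Qs by simp
  fix s assume "s < length Qs"
  then have s: "s < u" using length_Qs by simp
  have "ttgt (Qs ! s) = ttgt (Fs ! s)" using arg_cong[OF ttgt_Qs, of "\<lambda>l. l ! s"] s length_Qs by simp
  then show "Qs ! s = plus_parts ! s" unfolding plus_parts_nth[OF s]
    by (intro tmor.equality) (simp_all add: Qs_nth[OF s] ttgt_A tmap_Qs_nth[OF s] tcomp_Qs_nth[OF s])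
qed

end

lemma (in multi_reedy_category) Theta_factorization:
  assumes family: "(cs, Fs) \<in> mmor (Theta C)"
  shows "\<exists>!(A, Qs). A \<in> ThetaMinus C M \<and> Dom (Theta C) A = cs \<and> (Cod (Theta C) A, Qs) \<in> ThetaPlus C P \<and>
     map (Cod (Theta C)) Qs = map (Cod (Theta C)) Fs \<and> Fs = map (\<lambda>Q. Cmp (Theta C) Q A) Qs"
proof -
  interpret theta_factorization C M P deg cs Fs by unfold_locales (fact family)
  have unique: "A = minus_part \<and> Qs = plus_parts"
    if "A \<in> ThetaMinus C M" "tsrc A = cs" "(ttgt A, Qs) \<in> ThetaPlus C P"
      "map ttgt Qs = map ttgt Fs" "Fs = map (\<lambda>Q. theta_cmp C Q A) Qs" for A Qs
  proof -
    interpret theta_factorization_unique C M P deg cs Fs A Qs by unfold_locales (fact that)+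
    show ?thesis using A_eq_minus_part Qs_eq_plus_parts by simp
  qed
  have "map ttgt plus_parts = map ttgt Fs"
    by (rule nth_equalityI) (simp_all add: plus_parts_nth)
  moreover have "Fs = map (\<lambda>Q. theta_cmp C Q minus_part) plus_parts"
    by (rule nth_equalityI) (simp_all add: plus_parts_nth plus_part_cmp_minus_part)
  ultimately show ?thesis unfolding Theta_simps
  proof (intro ex1I[of _ "(minus_part, plus_parts)"])
    fix x assume "case x of (A, Qs) \<Rightarrow> A \<in> ThetaMinus C M \<and> tsrc A = cs \<and> (ttgt A, Qs) \<in> ThetaPlus C P \<and>
        map ttgt Qs = map ttgt Fs \<and> Fs = map (\<lambda>Q. theta_cmp C Q A) Qs"
    then show "x = (minus_part, plus_parts)" using unique by (cases x) simp
  qed (simp add: minus_part_in_ThetaMinus plus_parts_in_ThetaPlus)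
qed

section \<open>Degrees\<close>

lemma sum_list_map_eq_sum_nth: "sum_list (map f xs) = (\<Sum>t<length xs. f (xs ! t))"
  by (simp add: sum_list_sum_nth atLeast0LessThan)

lemma theta_arrow_eq_theta_id:
  assumes C: "is_category C" and F: "F \<in> theta_arrows C"
    and tmap: "\<And>i. i \<le> length (tsrc F) \<Longrightarrow> tmap F ! i = i"
    and len: "length (ttgt F) = length (tsrc F)"
    and Id: "\<And>i. i < length (tsrc F) \<Longrightarrow> tcomp F ! i ! 0 = Id C (tsrc F ! i)"
  shows "F = theta_id C (tsrc F)"
proof -
  have tcomp_i: "tcomp F ! i = [Id C (tsrc F ! i)]" if i: "i < length (tsrc F)" for i
  proof -
    have "length (tcomp F ! i) = 1" using theta_arrowsD(5)[OF F i] tmap[of i] tmap[of "Suc i"] i by simp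
    then show ?thesis using Id[OF i] by (cases "tcomp F ! i") auto
  qed
  have "ttgt F ! i = tsrc F ! i" if i: "i < length (tsrc F)" for i
  proof -
    have "tsrc F ! i \<in> Ob C" using theta_arrowsD(1)[OF F] i by auto
    then show ?thesis
      using theta_arrowsD(6)[OF F i, of 0] tcomp_i[OF i] tmap[of i] i categoryD(2)[OF C] by simp
  qed
  then have "ttgt F = tsrc F" using len by (simp add: nth_equalityI)
  moreover have "tmap F = [0..<Suc (length (tsrc F))]"
    by (rule nth_equalityI) (use length_tmap[OF F] tmap in \<open>simp_all del: upt_Suc\<close>)
  moreover have "tcomp F = map (\<lambda>c. [Id C c]) (tsrc F)"
    by (rule nth_equalityI) (use theta_arrowsD(4)[OF F] tcomp_i in simp_all)
  ultimately show ?thesis by (intro tmor.equality) (simp_all add: theta_id_def)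
qed

text \<open>deg_gap deg F i compares the degree of [i](c_1,...,c_i) with that of
  [\<alpha>(i)](d_1,...,d_{\<alpha>(i)}); along an arrow of (\<Theta>C)^- it grows from 0 to the difference of
  the degrees of source and target, and it stays constant exactly at identity steps.\<close>

definition deg_gap :: "('o \<Rightarrow> nat) \<Rightarrow> ('o, 'm) tmor \<Rightarrow> nat \<Rightarrow> int" where
  "deg_gap deg F i = int (i + (\<Sum>t<i. deg (tsrc F ! t))) -
     int (tmap F ! i + (\<Sum>t<tmap F ! i. deg (ttgt F ! t)))"

lemma deg_gap_0: "F \<in> ThetaMinus C M \<Longrightarrow> deg_gap deg F 0 = 0"
  unfolding deg_gap_def by (simp add: ThetaMinus_tmap_0)

lemma deg_gap_last:
  "F \<in> ThetaMinus C M \<Longrightarrow>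
     deg_gap deg F (length (tsrc F)) = int (ThetaDeg deg (tsrc F)) - int (ThetaDeg deg (ttgt F))"
  unfolding deg_gap_def ThetaDeg_def ThetaMinus_tmap_last sum_list_map_eq_sum_nth by simp

lemma sum_list_concat_nat: "sum_list (concat xss) = sum_list (map sum_list (xss :: nat list list))"
  by (induction xss) auto

lemma sum_list_map_sum_swap:
  "sum_list (map (\<lambda>x. \<Sum>i\<in>A. g x i) xs) = (\<Sum>i\<in>A. sum_list (map (\<lambda>x. g x i) xs) :: nat)"
  by (induction xs) (auto simp: sum.distrib)

lemma sum_list_strict_mono_ex1:
  fixes f g :: "'a \<Rightarrow> nat"
  assumes "\<And>x. x \<in> set xs \<Longrightarrow> f x \<le> g x" and "x0 \<in> set xs" and "f x0 < g x0"
  shows "sum_list (map f xs) < sum_list (map g xs)"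
  using assms
proof (induction xs)
  case (Cons a xs)
  then show ?case
    using sum_list_mono[of xs f g] by (cases "x0 = a") (auto intro: add_le_less_mono add_less_le_mono)
qed simp

lemma sum_blocks_telescope:
  assumes "\<forall>i<m. (\<alpha> :: nat list) ! i \<le> \<alpha> ! Suc i"
  shows "(\<Sum>i<m. \<Sum>j\<in>{\<alpha> ! i..<\<alpha> ! Suc i}. h j) = (\<Sum>j\<in>{\<alpha> ! 0..<\<alpha> ! m}. (h j :: nat))"
  using assms
proof (induction m)
  case (Suc m)
  have "\<alpha> ! 0 \<le> \<alpha> ! m" "\<alpha> ! m \<le> \<alpha> ! Suc m"
    using bounded_lift_Suc_mono_le[where f = "(!) \<alpha>", OF Suc.prems, of 0 m] Suc.prems by simp_all
  then show ?case using Suc sum.atLeastLessThan_concat[of "\<alpha> ! 0" "\<alpha> ! m" "\<alpha> ! Suc m" h] by simp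
qed simp

lemma sum_list_deg_tcomp:
  assumes F: "F \<in> theta_arrows C" and i: "i < length (tsrc F)"
  shows "sum_list (map (\<lambda>g. deg (Cod C g)) (tcomp F ! i)) =
    (\<Sum>j\<in>{tmap F ! i..<tmap F ! Suc i}. deg (ttgt F ! j))"
proof -
  have "map (\<lambda>g. deg (Cod C g)) (tcomp F ! i) = map (\<lambda>j. deg (ttgt F ! j)) [tmap F ! i..<tmap F ! Suc i]"
    unfolding tcomp_eq_map_entry[OF F i] using entry_arrow[OF F i] by simp
  then show ?thesis by (simp add: sum_set_upt_conv_sum_list_nat[symmetric])
qed

text \<open>Since (tmap F)_F separates the points of [m], the sum of the tmap F ! i strictly
  increases in i; this bounds m by the total length of the images.\<close>

lemma ThetaPlus_length_le:
  assumes Fs: "(cs, Fs) \<in> ThetaPlus C P"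
  shows "length cs \<le> sum_list (map (\<lambda>F. tmap F ! length cs - tmap F ! 0) Fs)"
proof -
  define T where "T i = sum_list (map (\<lambda>F. tmap F ! i) Fs)" for i
  have mono: "tmap F ! a \<le> tmap F ! b" if "F \<in> set Fs" "a \<le> b" "b \<le> length cs" for F a b
    using theta_arrow_mono_le ThetaPlusD(4)[OF Fs that(1)] that(2,3) by metis
  have "Suc (T i) \<le> T (Suc i)" if i: "i < length cs" for i
  proof -
    obtain F where "F \<in> set Fs" "tmap F ! i < tmap F ! Suc i" using ThetaPlus_tmap_increases[OF Fs i] .
    then have "T i < T (Suc i)" unfolding T_def using mono i by (intro sum_list_strict_mono_ex1) auto
    then show ?thesis by simp
  qed
  then have "i + T 0 \<le> T i" if "i \<le> length cs" for i
    using that by (induction i) (auto intro: order_trans)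
  moreover have "T (length cs) = sum_list (map (\<lambda>F. tmap F ! length cs - tmap F ! 0) Fs) + T 0"
    unfolding T_def sum_list_addf[symmetric] using mono[of _ 0 "length cs"]
    by (intro arg_cong[where f = sum_list] map_cong) auto
  ultimately show ?thesis by fastforce
qed

lemma nth_eq_self_if_strict_steps:
  assumes "\<forall>i<m. \<alpha> ! i < \<alpha> ! Suc i" and "\<alpha> ! 0 = 0" and "\<alpha> ! m = m" and "i \<le> m"
  shows "\<alpha> ! i = (i :: nat)"
proof -
  define g where "g i = int (\<alpha> ! i) - int i" for i
  have "\<forall>i<m. g i \<le> g (Suc i)" using assms(1) unfolding g_def by force
  then have "g 0 \<le> g i" "g i \<le> g m" using bounded_lift_Suc_mono_le[of m g] assms(4) by simp_all
  then show ?thesis using assms(2,3) unfolding g_def by simp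
qed

context multi_reedy_category
begin

lemma deg_gap_Suc:
  assumes F: "F \<in> ThetaMinus C M" and i: "i < length (tsrc F)"
  shows "deg_gap deg F i \<le> deg_gap deg F (Suc i)"
    and "deg_gap deg F i = deg_gap deg F (Suc i) \<Longrightarrow>
      tmap F ! Suc i = Suc (tmap F ! i) \<and> tcomp F ! i ! 0 = Id C (tsrc F ! i)"
proof -
  have "deg_gap deg F i \<le> deg_gap deg F (Suc i) \<and> (deg_gap deg F i = deg_gap deg F (Suc i) \<longrightarrow>
      tmap F ! Suc i = Suc (tmap F ! i) \<and> tcomp F ! i ! 0 = Id C (tsrc F ! i))"
  proof (cases "tmap F ! i = tmap F ! Suc i")
    case True
    then show ?thesis unfolding deg_gap_def by simp
  next
    case False
    note step = ThetaMinus_step[OF F i False]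
    have "deg_gap deg F (Suc i) =
        deg_gap deg F i + int (deg (tsrc F ! i)) - int (deg (ttgt F ! (tmap F ! i)))"
      unfolding deg_gap_def step(1) by simp
    then show ?thesis
      using deg_minus[OF step(3)] deg_minus_eq_iff[OF step(3)] step(1,5,6) by auto
  qed
  then show "deg_gap deg F i \<le> deg_gap deg F (Suc i)"
    and "deg_gap deg F i = deg_gap deg F (Suc i) \<Longrightarrow>
      tmap F ! Suc i = Suc (tmap F ! i) \<and> tcomp F ! i ! 0 = Id C (tsrc F ! i)" by simp_all
qed

lemma ThetaMinus_deg_le:
  assumes F: "F \<in> ThetaMinus C M"
  shows "ThetaDeg deg (ttgt F) \<le> ThetaDeg deg (tsrc F)"
  using bounded_lift_Suc_mono_le[of "length (tsrc F)" "deg_gap deg F" 0 "length (tsrc F)"]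
    deg_gap_Suc(1)[OF F] deg_gap_0[OF F] deg_gap_last[OF F] by simp

lemma ThetaMinus_deg_eq_iff:
  assumes F: "F \<in> ThetaMinus C M"
  shows "ThetaDeg deg (tsrc F) = ThetaDeg deg (ttgt F) \<longleftrightarrow> F = theta_id C (tsrc F)"
proof
  assume eq: "ThetaDeg deg (tsrc F) = ThetaDeg deg (ttgt F)"
  let ?m = "length (tsrc F)"
  note chain = bounded_lift_Suc_mono_le[of ?m "deg_gap deg F"]
  have steps: "tmap F ! Suc i = Suc (tmap F ! i) \<and> tcomp F ! i ! 0 = Id C (tsrc F ! i)" if i: "i < ?m" for i
  proof -
    have "deg_gap deg F 0 \<le> deg_gap deg F i" "deg_gap deg F (Suc i) \<le> deg_gap deg F ?m"
      using chain deg_gap_Suc(1)[OF F] i by auto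
    then have "deg_gap deg F i = deg_gap deg F (Suc i)"
      using deg_gap_Suc(1)[OF F i] deg_gap_0[OF F] deg_gap_last[OF F] eq by simp
    then show ?thesis by (rule deg_gap_Suc(2)[OF F i])
  qed
  have tmap: "tmap F ! i = i" if "i \<le> ?m" for i
    using that by (induction i) (use ThetaMinus_tmap_0[OF F] steps in auto)
  show "F = theta_id C (tsrc F)"
    by (rule theta_arrow_eq_theta_id[OF category ThetaMinusD(1)[OF F] tmap])
      (use ThetaMinus_tmap_last[OF F] tmap[of ?m] steps in simp_all)
next
  assume "F = theta_id C (tsrc F)"
  then have "ttgt F = tsrc F" by (metis theta_id_simps(2))
  then show "ThetaDeg deg (tsrc F) = ThetaDeg deg (ttgt F)" by simp
qed

lemma ThetaPlus_sum_deg_le: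
  assumes Fs: "(cs, Fs) \<in> ThetaPlus C P"
  shows "sum_list (map deg cs) \<le>
    sum_list (map (\<lambda>F. \<Sum>j\<in>{tmap F ! 0..<tmap F ! length cs}. deg (ttgt F ! j)) Fs)"
proof -
  note F = ThetaPlusD(4)[OF Fs]
  have "sum_list (map deg cs) = (\<Sum>i<length cs. deg (cs ! i))" by (rule sum_list_map_eq_sum_nth)
  also have "\<dots> \<le> (\<Sum>i<length cs. sum_list (map (\<lambda>F. \<Sum>j\<in>{tmap F ! i..<tmap F ! Suc i}. deg (ttgt F ! j)) Fs))"
  proof (rule sum_mono)
    fix i assume "i \<in> {..<length cs}"
    then have i: "i < length cs" by simp
    have "deg (cs ! i) \<le> sum_list (map (\<lambda>f. deg (Cod C f)) (concat (map (\<lambda>F. tcomp F ! i) Fs)))"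
      by (rule deg_plus[OF ThetaPlusD(3)[OF Fs i]])
    also have "\<dots> = sum_list (map (\<lambda>F. sum_list (map (\<lambda>f. deg (Cod C f)) (tcomp F ! i))) Fs)"
      by (simp add: map_concat sum_list_concat_nat o_def)
    also have "\<dots> = sum_list (map (\<lambda>F. \<Sum>j\<in>{tmap F ! i..<tmap F ! Suc i}. deg (ttgt F ! j)) Fs)"
      using sum_list_deg_tcomp[of _ C i deg] F i by (intro arg_cong[where f = sum_list] map_cong) simp_all
    finally show "deg (cs ! i) \<le> \<dots>" .
  qed
  also have "\<dots> = sum_list (map (\<lambda>F. \<Sum>i<length cs. \<Sum>j\<in>{tmap F ! i..<tmap F ! Suc i}. deg (ttgt F ! j)) Fs)"
    by (rule sum_list_map_sum_swap[symmetric])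
  also have "\<dots> = sum_list (map (\<lambda>F. \<Sum>j\<in>{tmap F ! 0..<tmap F ! length cs}. deg (ttgt F ! j)) Fs)"
  proof (intro arg_cong[where f = sum_list] map_cong refl)
    fix F assume "F \<in> set Fs"
    then show "(\<Sum>i<length cs. \<Sum>j\<in>{tmap F ! i..<tmap F ! Suc i}. deg (ttgt F ! j)) =
        (\<Sum>j\<in>{tmap F ! 0..<tmap F ! length cs}. deg (ttgt F ! j))"
      using sum_blocks_telescope[OF theta_arrow_mono[of F C]] F by simp
  qed
  finally show ?thesis .
qed

lemma ThetaPlus_deg_le:
  assumes Fs: "(cs, Fs) \<in> ThetaPlus C P"
  shows "ThetaDeg deg cs \<le> sum_list (map (\<lambda>F. ThetaDeg deg (ttgt F)) Fs)"
proof -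
  have bound: "tmap F ! length cs \<le> length (ttgt F)" if "F \<in> set Fs" for F
    using tmap_le_length_ttgt ThetaPlusD(4)[OF Fs that] by fastforce
  have "sum_list (map (\<lambda>F. tmap F ! length cs - tmap F ! 0) Fs) \<le> sum_list (map (\<lambda>F. length (ttgt F)) Fs)"
    by (rule sum_list_mono) (use bound in fastforce)
  moreover have "sum_list (map (\<lambda>F. \<Sum>j\<in>{tmap F ! 0..<tmap F ! length cs}. deg (ttgt F ! j)) Fs)
      \<le> sum_list (map (\<lambda>F. sum_list (map deg (ttgt F))) Fs)"
  proof (rule sum_list_mono)
    fix F assume "F \<in> set Fs"
    then have "{tmap F ! 0..<tmap F ! length cs} \<subseteq> {..<length (ttgt F)}" using bound by fastforce
    then show "(\<Sum>j\<in>{tmap F ! 0..<tmap F ! length cs}. deg (ttgt F ! j)) \<le> sum_list (map deg (ttgt F))"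
      unfolding sum_list_map_eq_sum_nth[of deg] by (rule sum_mono2[OF finite_lessThan]) simp_all
  qed
  ultimately show ?thesis
    unfolding ThetaDeg_def using ThetaPlus_length_le[OF Fs] ThetaPlus_sum_deg_le[OF Fs]
    by (simp add: sum_list_addf)
qed

lemma ThetaPlus_deg_eq_iff:
  assumes f: "f \<in> theta_arrows C" and plus: "(tsrc f, [f]) \<in> ThetaPlus C P"
  shows "ThetaDeg deg (tsrc f) = ThetaDeg deg (ttgt f) \<longleftrightarrow> f = theta_id C (tsrc f)"
proof
  assume eq: "ThetaDeg deg (tsrc f) = ThetaDeg deg (ttgt f)"
  let ?m = "length (tsrc f)" and ?n = "length (ttgt f)" and ?\<alpha> = "tmap f"
  have "?\<alpha> ! ?m \<le> ?n" using tmap_le_length_ttgt[OF f] by simp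
  moreover have "(\<Sum>j\<in>{?\<alpha> ! 0..<?\<alpha> ! ?m}. deg (ttgt f ! j)) \<le> (\<Sum>j<?n. deg (ttgt f ! j))"
    using calculation by (intro sum_mono2) auto
  moreover have "?\<alpha> ! 0 \<le> ?\<alpha> ! ?m" using theta_arrow_mono_le[OF f] by simp
  ultimately have lengths: "?n = ?m" "?\<alpha> ! 0 = 0" "?\<alpha> ! ?m = ?m"
    and "(\<Sum>i<?m. deg (tsrc f ! i)) = (\<Sum>j<?n. deg (ttgt f ! j))"
    using ThetaPlus_length_le[OF plus] ThetaPlus_sum_deg_le[OF plus] eq
    unfolding ThetaDeg_def sum_list_map_eq_sum_nth[of deg] by auto
  then have sums: "(\<Sum>i<?m. deg (tsrc f ! i)) = (\<Sum>j<?m. deg (ttgt f ! j))" by simp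
  have "?\<alpha> ! i < ?\<alpha> ! Suc i" if "i < ?m" for i
    using ThetaPlus_tmap_increases[OF plus that] by auto
  then have tmap: "?\<alpha> ! i = i" if "i \<le> ?m" for i
    using nth_eq_self_if_strict_steps[of ?m ?\<alpha> i] lengths that by blast
  have entry: "tcomp f ! i = [tcomp f ! i ! 0]" "tcomp f ! i ! 0 \<in> Ar C"
    "Dom C (tcomp f ! i ! 0) = tsrc f ! i" "Cod C (tcomp f ! i ! 0) = ttgt f ! i"
    "(tsrc f ! i, [tcomp f ! i ! 0]) \<in> P" if i: "i < ?m" for i
  proof -
    have "length (tcomp f ! i) = 1" using theta_arrowsD(5)[OF f i] tmap[of i] tmap[of "Suc i"] i by simp
    then show "tcomp f ! i = [tcomp f ! i ! 0]" by (cases "tcomp f ! i") auto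
    then show "(tsrc f ! i, [tcomp f ! i ! 0]) \<in> P" using ThetaPlusD(3)[OF plus i] by simp
    show "tcomp f ! i ! 0 \<in> Ar C" "Dom C (tcomp f ! i ! 0) = tsrc f ! i"
      "Cod C (tcomp f ! i ! 0) = ttgt f ! i"
      using theta_arrowsD(6)[OF f i, of 0] \<open>length (tcomp f ! i) = 1\<close> tmap[of i] i by simp_all
  qed
  have deg_le: "deg (tsrc f ! i) \<le> deg (ttgt f ! i)" if "i < ?m" for i
    using deg_plus[OF entry(5)[OF that]] entry(4)[OF that] by simp
  have "deg (tsrc f ! i) = deg (ttgt f ! i)" if i: "i < ?m" for i
  proof (rule ccontr)
    assume "deg (tsrc f ! i) \<noteq> deg (ttgt f ! i)"
    then have "(\<Sum>i<?m. deg (tsrc f ! i)) < (\<Sum>j<?m. deg (ttgt f ! j))"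
      using deg_le i by (intro sum_strict_mono_ex1) (auto intro: le_neq_implies_less)
    then show False using sums by simp
  qed
  then have "tcomp f ! i ! 0 = Id C (tsrc f ! i)" if "i < ?m" for i
    using deg_plus_eq_iff[of "tcomp f ! i ! 0"] entry[OF that] that by simp
  then show "f = theta_id C (tsrc f)"
    using theta_arrow_eq_theta_id[OF category f tmap] lengths by simp
next
  assume "f = theta_id C (tsrc f)"
  then have "ttgt f = tsrc f" by (metis theta_id_simps(2))
  then show "ThetaDeg deg (tsrc f) = ThetaDeg deg (ttgt f)" by simp
qed

lemma factorization_arrow:
  assumes f: "f \<in> Ar C"
  shows "\<exists>!(a, p). a \<in> M \<and> p \<in> {g \<in> Ar C. (Dom C g, [g]) \<in> P} \<and> Dom C a = Dom C f \<and>
    Cod C a = Dom C p \<and> Cod C p = Cod C f \<and> f = Cmp C p a"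
proof -
  let ?fact = "\<lambda>(a, ps). a \<in> M \<and> Dom C a = Dom C f \<and> (Cod C a, ps) \<in> P \<and>
    map (Cod C) ps = map (Cod C) [f] \<and> [f] = map (\<lambda>p. Cmp C p a) ps"
  have "(Dom C f, [f]) \<in> mmor C" using categoryD(1)[OF category f] f unfolding mmor_def by simp
  from factorization[OF this] obtain x where x: "?fact x" and unique: "\<forall>y. ?fact y \<longrightarrow> y = x"
    by (rule ex1E)
  obtain a ps where x_eq: "x = (a, ps)" by (cases x)
  have aps: "?fact (a, ps)" using x unfolding x_eq .
  have unique: "\<And>y. ?fact y \<Longrightarrow> y = (a, ps)" using mp[OF spec[OF unique]] unfolding x_eq .
  obtain p where ps: "ps = [p]" using aps by (cases ps) auto
  then have p: "p \<in> Ar C" "Dom C p = Cod C a" using aps plus_mmor unfolding mmor_def by auto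
  show ?thesis
  proof (rule ex1I[of _ "(a, p)"])
    show "case (a, p) of (a, p) \<Rightarrow> a \<in> M \<and> p \<in> {g \<in> Ar C. (Dom C g, [g]) \<in> P} \<and>
        Dom C a = Dom C f \<and> Cod C a = Dom C p \<and> Cod C p = Cod C f \<and> f = Cmp C p a"
      using aps ps p by auto
    fix y assume y: "case y of (a, p) \<Rightarrow> a \<in> M \<and> p \<in> {g \<in> Ar C. (Dom C g, [g]) \<in> P} \<and>
      Dom C a = Dom C f \<and> Cod C a = Dom C p \<and> Cod C p = Cod C f \<and> f = Cmp C p a"
    obtain a' p' where y_eq: "y = (a', p')" by (cases y)
    have "?fact (a', [p'])" using y unfolding y_eq by auto
    then have "(a', [p']) = (a, ps)" by (rule unique)
    then show "y = (a, p)" using y_eq ps by simp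
  qed
qed

lemma reedy_single_output: "reedy C M {f \<in> Ar C. (Dom C f, [f]) \<in> P} deg"
proof -
  let ?Mp = "{f \<in> Ar C. (Dom C f, [f]) \<in> P}"
  have "Cmp C g f \<in> ?Mp" if "f \<in> ?Mp" "g \<in> ?Mp" "Cod C f = Dom C g" for f g
  proof -
    have "mcomp C (Dom C f, [f]) [[g]] \<in> P"
      by (rule wide_submulticatD(3)[OF wide_plus]) (use that in \<open>auto simp: less_Suc_eq\<close>)
    then show ?thesis using categoryD(3)[OF category, of f g] that unfolding mcomp_def by simp
  qed
  then have "wide_subcat C ?Mp"
    unfolding wide_subcat_def using categoryD(2)[OF category] wide_submulticatD(2)[OF wide_plus] by auto
  moreover note factorization_arrow
  moreover have "deg (Dom C f) \<le> deg (Cod C f) \<and>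
      (deg (Dom C f) = deg (Cod C f) \<longleftrightarrow> f = Id C (Dom C f))" if "f \<in> ?Mp" for f
    using deg_plus[of "Dom C f" "[f]"] deg_plus_eq_iff[of f] that by simp
  ultimately show ?thesis
    unfolding reedy_def using category wide_minus deg_minus deg_minus_eq_iff by blast
qed

end

theorem mainTheorem2:
  fixes C :: "('o, 'm) cat" and M :: "'m set" and P :: "('o \<times> 'm list) set" and deg :: "'o \<Rightarrow> nat"
  assumes "multi_reedy C M P deg"
  shows "multi_reedy (Theta C) (ThetaMinus C M) (ThetaPlus C P) (ThetaDeg deg) \<and>
         (\<exists>Mm Mp d. reedy (Theta C) Mm Mp d)"
proof -
  interpret multi_reedy_category C M P deg by unfold_locales (fact assms)
  have "multi_reedy (Theta C) (ThetaMinus C M) (ThetaPlus C P) (ThetaDeg deg)"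
    unfolding multi_reedy_def Theta_simps
  proof (intro conjI ballI impI)
    show "is_category (Theta C)" by (rule is_category_Theta[OF category])
    show "wide_subcat (Theta C) (ThetaMinus C M)"
      by (rule wide_subcat_ThetaMinus[OF category wide_minus])
    show "wide_submulticat (Theta C) (ThetaPlus C P)"
      by (rule wide_submulticat_ThetaPlus[OF category wide_plus])
  next
    fix x assume "x \<in> mmor (Theta C)"
    then show "case x of (c, fs) \<Rightarrow> \<exists>!(a, ps). a \<in> ThetaMinus C M \<and> tsrc a = c \<and>
        (ttgt a, ps) \<in> ThetaPlus C P \<and> map ttgt ps = map ttgt fs \<and> fs = map (\<lambda>p. theta_cmp C p a) ps"
      using Theta_factorization by (cases x) simp
  next
    fix x assume "x \<in> ThetaPlus C P"
    then show "case x of (c, fs) \<Rightarrow> ThetaDeg deg c \<le> (\<Sum>f\<leftarrow>fs. ThetaDeg deg (ttgt f))"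
      using ThetaPlus_deg_le by (cases x) simp
  qed (simp_all add: ThetaPlus_deg_eq_iff ThetaMinus_deg_le ThetaMinus_deg_eq_iff)
  then show ?thesis
    using multi_reedy_category.reedy_single_output[OF multi_reedy_category.intro] by blast
qed

end
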